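(* Consider the two-dimensional risk model with constant interest rate described in the context (with $c_1/\delta_1>c_2/\delta_2$). For $T>0$ and $x_1,x_2$, let $$\Psi_{\max}(x_1,x_2,T)=P\{T_{\max}(\delta_1x_1,\delta_2x_2)\le T\}=P\{\exists\,t\le T:\ X_1(t)<0\text{ and }X_2(t)<0\},$$ where $X_i(t)=x_i+p_i(1-e^{-rt})-\sum_{k=1}^{N(t)}e^{-r\theta_k}\sigma_k$ and $p_i=\frac{c_i}{r\delta_i}$. Let $V$ be uniformly distributed on $(0,T]$, independent of $\sigma_1$, and $F_T(x)=P\{e^{-rV}\sigma_1\le x\}$, $\overline{F_T}=1-F_T$. Suppose $P\{\sigma_k>x\}=L(x)/x^{\alpha}$, where $\alpha>0$ and $L$ is continuous, slowly varying, with $\lim_{x\to\infty}L(x)=\infty$. Then for any $T>0$, $$\lim_{x_2\ge x_1\to\infty}\frac{\Psi_{\max}(x_1,x_2,T)}{\lambda T\,\overline{F_T}(x_2)}=1,$$ the limit being taken as $x_1\to\infty$ over pairs with $x_2\ge x_1$.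
   Context: Model: $U_i(t)=e^{rt}u_i+\frac{c_i}{r}(e^{rt}-1)-\delta_i\sum_{k=1}^{N(t)}e^{r(t-\theta_k)}\sigma_k$, $i=1,2$, where $r>0$ is the interest rate, $u_i$ initial reserves, $c_i>0$ premium rates, $0<\delta_1,\delta_2<1$ with $\delta_1+\delta_2=1$, $N(t)$ a Poisson process with intensity $\lambda>0$, $\{\sigma_k\}$ i.i.d. nonnegative claim sizes independent of $N$, and $\theta_k$ the $k$-th arrival time of $N$. $T_{\max}(u_1,u_2)=\inf\{t\ge0:\max\{U_1(t),U_2(t)\}<0\}$. Standing assumption $c_1/\delta_1>c_2/\delta_2$, i.e. $p_1>p_2$. Note $X_i(t)=e^{-rt}U_i(t)/\delta_i$ with $x_i=u_i/\delta_i$. *)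

theory Defs
  imports "HOL-Probability.Probability"
begin

text \<open>Arrival times of the Poisson process built from inter-arrival times W:
  index k :: nat corresponds to the (k+1)-th claim, theta k = W 0 + ... + W k.\<close>
definition arrival :: "(nat \<Rightarrow> 'a \<Rightarrow> real) \<Rightarrow> nat \<Rightarrow> 'a \<Rightarrow> real" where
  "arrival W k \<omega> = (\<Sum>i\<le>k. W i \<omega>)"

definition count_proc :: "(nat \<Rightarrow> 'a \<Rightarrow> real) \<Rightarrow> real \<Rightarrow> 'a \<Rightarrow> nat" where
  "count_proc W t \<omega> = card {k. arrival W k \<omega> \<le> t}"

definition Xproc :: "real \<Rightarrow> real \<Rightarrow> real \<Rightarrow> (nat \<Rightarrow> 'a \<Rightarrow> real) \<Rightarrow> (nat \<Rightarrow> 'a \<Rightarrow> real)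
    \<Rightarrow> real \<Rightarrow> 'a \<Rightarrow> real" where
  "Xproc r p x W \<sigma> t \<omega> =
     x + p * (1 - exp (- r * t))
       - (\<Sum>k<count_proc W t \<omega>. exp (- r * arrival W k \<omega>) * \<sigma> k \<omega>)"

definition Psi_max :: "'a measure \<Rightarrow> real \<Rightarrow> real \<Rightarrow> real \<Rightarrow> (nat \<Rightarrow> 'a \<Rightarrow> real)
    \<Rightarrow> (nat \<Rightarrow> 'a \<Rightarrow> real) \<Rightarrow> real \<Rightarrow> real \<Rightarrow> real \<Rightarrow> real" where
  "Psi_max M r p1 p2 W \<sigma> x1 x2 T =
     measure M {\<omega> \<in> space M. \<exists>t. 0 \<le> t \<and> t \<le> T \<and>
        Xproc r p1 x1 W \<sigma> t \<omega> < 0 \<and> Xproc r p2 x2 W \<sigma> t \<omega> < 0}"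

definition slowly_varying :: "(real \<Rightarrow> real) \<Rightarrow> bool" where
  "slowly_varying L \<longleftrightarrow> (\<forall>\<^sub>F x in at_top. L x > 0) \<and>
     (\<forall>c>0. ((\<lambda>x. L (c * x) / L x) \<longlongrightarrow> 1) at_top)"

end

theory Submission
  imports Defs
begin

text \<open>
  Put \<open>I(y) = \<integral>\<^sub>0\<^sup>T Fbar(y e^{rt}) dt\<close> with \<open>Fbar\<close> the claim tail, so that
  \<open>T P{e^{-rV} \<sigma>\<^sub>1 > x} = I(x)\<close> and \<open>I\<close> inherits regular variation of index \<open>-\<alpha>\<close> from \<open>Fbar\<close>.
  Because \<open>p\<^sub>2 \<le> p\<^sub>1\<close>, a single discounted claim \<open>e^{-r\<theta>\<^sub>k} \<sigma>\<^sub>k > x\<^sub>2 + p\<^sub>1\<close> with \<open>\<theta>\<^sub>k \<le> T\<close>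
  ruins both components at \<open>\<theta>\<^sub>k\<close>. The Erlang densities of the \<open>\<theta>\<^sub>k\<close> sum to \<open>\<lambda>\<close>, so these
  events have total probability \<open>\<lambda> I(x\<^sub>2 + p\<^sub>1)\<close>, and by Bonferroni their overlaps cost only
  \<open>O(Fbar(x\<^sub>2)\<^sup>2)\<close>. Conversely, ruin forces the discounted claims before \<open>T\<close> to sum beyond
  \<open>x\<^sub>2\<close>, so one of them exceeds \<open>(1 - \<epsilon>) x\<^sub>2\<close>, or two of the first \<open>m\<close> claims exceed
  \<open>\<epsilon> x\<^sub>2 / m\<close>, or more than \<open>m\<close> claims arrive before \<open>T\<close> and some \<open>\<sigma>\<^sub>k\<close> exceeds
  \<open>x\<^sub>2 (1 - \<tau>) \<tau>\<^sup>k\<close>. The last two events are negligible against \<open>I(x\<^sub>2)\<close> by independence,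
  the geometric decay of \<open>P{\<theta>\<^sub>k \<le> T}\<close> and Potter's bound, and regular variation gives
  \<open>I((1 \<plusminus> \<epsilon>) x\<^sub>2) = (1 \<plusminus> O(\<epsilon>)) I(x\<^sub>2)\<close>.
\<close>

lemma eventually_at_top_scale:
  fixes c :: real
  assumes "c > 0" and "\<forall>\<^sub>F x in at_top. P x"
  shows "\<forall>\<^sub>F x in at_top. P (c * x)"
  using assms(2) filterlim_tendsto_pos_mult_at_top[OF tendsto_const assms(1) filterlim_ident]
  by (rule eventually_compose_filterlim)

lemma exists_power2_between:
  fixes u :: real assumes u: "u \<ge> 1"
  shows "\<exists>j::nat. u \<le> 2 ^ j \<and> 2 ^ j < 2 * u"
proof -
  define j where "j = nat \<lceil>log 2 u\<rceil>"
  have l: "log 2 u \<ge> 0" using u by simp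
  have j1: "real j \<ge> log 2 u" unfolding j_def using l by linarith
  have j2: "real j < log 2 u + 1" unfolding j_def using l by linarith
  have "(2::real) ^ j = 2 powr real j" by (simp add: powr_realpow)
  moreover have "2 powr log 2 u = u" using u by simp
  moreover have "2 powr (log 2 u + 1) = 2 * u" using u by (simp add: powr_add)
  ultimately show ?thesis using j1 j2
    by (intro exI[of _ j]) (metis powr_le_cancel_iff powr_less_cancel_iff one_less_numeral_iff semiring_norm(76))
qed

lemma halving_bound_iterate:
  fixes f :: "real \<Rightarrow> real"
  assumes K: "K \<ge> 0" and z0: "z0 \<ge> 0" and half: "\<And>z. z \<ge> z0 \<Longrightarrow> f (z / 2) \<le> K * f z"
  shows "x / 2 ^ j \<ge> z0 \<Longrightarrow> f (x / 2 ^ j) \<le> K ^ j * f x"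
proof (induction j arbitrary: x)
  case 0 then show ?case by simp
next
  case (Suc j)
  define w where "w = x / 2 ^ j"
  have w: "x / 2 ^ Suc j = w / 2" unfolding w_def by simp
  have wz: "w \<ge> z0" using Suc.prems z0 unfolding w by linarith
  have "f (w / 2) \<le> K * f w" using half[OF wz] .
  also have "\<dots> \<le> K * (K ^ j * f x)" using Suc.IH wz K unfolding w_def by (intro mult_left_mono) auto
  finally have "f (w / 2) \<le> K ^ Suc j * f x" by (simp add: mult.assoc)
  then show ?case by (simp only: w)
qed

lemma one_le_powr_bound:
  fixes x u b a F :: real
  assumes x: "0 < x" "x < b * u" and u: "u \<ge> 1" and a: "a > 0" and F: "x powr - a \<le> F"
  shows "1 \<le> b powr a * u powr (a + 1) * F"
proof -
  have "0 < b * u" using x by linarith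
  then have b: "b > 0" using u by (simp add: zero_less_mult_iff)
  have F0: "0 \<le> F" using F by (meson order_trans powr_ge_zero)
  have "1 = (b * u) powr a * (b * u) powr - a"
    using b u by (simp add: powr_minus field_simps)
  also have "\<dots> \<le> (b * u) powr a * x powr - a"
    using x a by (intro mult_left_mono) (auto simp: powr_minus intro!: le_imp_inverse_le powr_mono2)
  also have "\<dots> \<le> (b * u) powr a * F" using F by (intro mult_left_mono) auto
  also have "\<dots> = b powr a * u powr a * F" using b u by (simp add: powr_mult)
  also have "\<dots> \<le> b powr a * u powr (a + 1) * F"
    using u F0 by (intro mult_right_mono mult_left_mono powr_mono) auto
  finally show ?thesis .
qed

lemma powr_minus_near_one:
  fixes a \<eta> :: real
  assumes \<eta>: "\<eta> > 0"
  shows "\<exists>\<epsilon>. 0 < \<epsilon> \<and> \<epsilon> \<le> 1/2 \<and> (1 - \<epsilon>) powr - a \<le> 1 + \<eta> \<and> 1 - \<eta> \<le> (1 + \<epsilon>) powr - a"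
proof -
  have "(\<lambda>c::real. c powr - a) \<midarrow>1\<rightarrow> 1 powr - a"
    by (intro tendsto_intros) auto
  then have "(\<lambda>c::real. c powr - a) \<midarrow>1\<rightarrow> 1" by simp
  from LIM_D[OF this \<eta>] obtain d where d: "d > 0" and
    dd: "\<And>c. c \<noteq> 1 \<and> norm (c - 1) < d \<Longrightarrow> norm (c powr - a - 1) < \<eta>" by blast
  define e where "e = min (d / 2) (1 / 2)"
  have e: "0 < e" "e \<le> 1/2" "e < d" unfolding e_def using d by auto
  have "norm ((1 - e) powr - a - 1) < \<eta>" using e by (intro dd) auto
  moreover have "norm ((1 + e) powr - a - 1) < \<eta>" using e by (intro dd) auto
  ultimately show ?thesis using e by (intro exI[of _ e]) auto
qed

lemma sum_gt_two_terms_large: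
  fixes y z :: "nat \<Rightarrow> real"
  assumes sum: "(\<Sum>k<n. y k) > x" and yz: "\<And>k. y k \<le> z k"
    and single: "\<And>k. k < n \<Longrightarrow> y k \<le> (1 - e) * x"
    and nm: "n \<le> m" and m: "m \<ge> 1" and e: "0 < e" "e < 1" and x: "x > 0"
  shows "\<exists>j<m. \<exists>k<m. j \<noteq> k \<and> z j > e * x / m \<and> z k > e * x / m"
proof (rule ccontr)
  define a where "a = e * x / m"
  have apos: "a \<ge> 0" unfolding a_def using e x by auto
  have ma: "real m * a = e * x" unfolding a_def using m by simp
  assume no: "\<not> ?thesis"
  show False
  proof (cases "\<forall>k<n. z k \<le> a")
    case True
    have "(\<Sum>k<n. y k) \<le> (\<Sum>k<n. a)" using True yz by (intro sum_mono) (auto intro: order_trans)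
    also have "\<dots> \<le> real m * a" using nm apos by (simp add: mult_right_mono)
    also have "\<dots> \<le> x" using ma e x by (simp add: mult_left_le_one_le)
    finally show False using sum by simp
  next
    case False
    then obtain k0 where k0: "k0 < n" "z k0 > a" by (auto simp: not_le)
    have others: "z k \<le> a" if "k < n" "k \<noteq> k0" for k
      using no k0 that nm unfolding a_def by (metis less_le_trans not_le)
    have "(\<Sum>k<n. y k) = y k0 + (\<Sum>k\<in>{..<n} - {k0}. y k)"
      using k0 by (intro sum.remove) auto
    also have "(\<Sum>k\<in>{..<n} - {k0}. y k) \<le> (\<Sum>k\<in>{..<n} - {k0}. a)"
      using others yz by (intro sum_mono) (auto intro: order_trans)
    also have "\<dots> = real (n - 1) * a" using k0 by simp
    also have "\<dots> \<le> real m * a" using apos nm by (intro mult_right_mono) auto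
    finally have "(\<Sum>k<n. y k) \<le> y k0 + e * x" using ma by simp
    moreover have "y k0 \<le> (1 - e) * x" using single k0 by auto
    ultimately show False using sum by (simp add: algebra_simps)
  qed
qed

lemma sum_gt_term_exceeds_geometric:
  fixes y z :: "nat \<Rightarrow> real"
  assumes sum: "(\<Sum>k<n. y k) > x" and yz: "\<And>k. y k \<le> z k" and \<tau>: "0 < \<tau>" "\<tau> < 1" and x: "x > 0"
  shows "\<exists>k<n. z k > x * (1 - \<tau>) * \<tau> ^ k"
proof (rule ccontr)
  assume "\<not> ?thesis"
  then have le: "k < n \<Longrightarrow> z k \<le> x * (1 - \<tau>) * \<tau> ^ k" for k by (meson not_less)
  have "(\<Sum>k<n. y k) \<le> (\<Sum>k<n. x * (1 - \<tau>) * \<tau> ^ k)"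
    using le yz by (intro sum_mono) (auto intro: order_trans)
  also have "\<dots> = x * (1 - \<tau>) * (\<Sum>k<n. \<tau> ^ k)" by (simp add: sum_distrib_left)
  also have "\<dots> = x * (1 - \<tau> ^ n)" using \<tau> by (simp add: sum_gp_strict)
  also have "\<dots> \<le> x" using \<tau> x by (simp add: zero_le_power)
  finally show False using sum by simp
qed

lemma suminf_erlang_density:
  assumes lam: "lam > 0"
  shows "(\<Sum>k. ennreal (erlang_density k lam t)) = ennreal lam * indicator {0..} t"
proof (cases "t < 0")
  case True then show ?thesis by (simp add: erlang_density_def)
next
  case False
  have "(\<lambda>k. (lam * exp (- lam * t)) * ((lam * t) ^ k /\<^sub>R fact k)) sums ((lam * exp (- lam * t)) * exp (lam * t))"
    by (intro sums_mult exp_converges)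
  moreover have "(lam * exp (- lam * t)) * exp (lam * t) = lam" by (simp add: exp_minus field_simps)
  moreover have "(\<lambda>k. (lam * exp (- lam * t)) * ((lam * t) ^ k /\<^sub>R fact k)) = (\<lambda>k. erlang_density k lam t)"
    using False by (auto simp: erlang_density_def power_mult_distrib field_simps mult.commute)
  ultimately have "(\<lambda>k. erlang_density k lam t) sums lam" by metis
  then have "(\<Sum>k. ennreal (erlang_density k lam t)) = ennreal lam"
    by (rule suminf_ennreal_eq[rotated]) (use lam in auto)
  then show ?thesis using False by simp
qed

context prob_space begin

lemma emeasure_pred_indep_pair:
  fixes X Y :: "'a \<Rightarrow> real" and P :: "real \<times> real \<Rightarrow> bool"
  assumes ind: "indep_var borel X borel Y" and P[measurable]: "Measurable.pred (borel \<Otimes>\<^sub>M borel) P"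
  shows "emeasure M {\<omega> \<in> space M. P (X \<omega>, Y \<omega>)} =
         (\<integral>\<^sup>+ t. emeasure M {\<omega> \<in> space M. P (t, Y \<omega>)} \<partial>(distr M borel X))"
proof -
  from ind[unfolded indep_var_distribution_eq]
  have X[measurable]: "X \<in> borel_measurable M" and Y[measurable]: "Y \<in> borel_measurable M"
    and eq: "distr M borel X \<Otimes>\<^sub>M distr M borel Y = distr M (borel \<Otimes>\<^sub>M borel) (\<lambda>x. (X x, Y x))"
    by auto
  interpret PY: prob_space "distr M borel Y" by (rule prob_space_distr) simp
  let ?A = "{x \<in> space (borel \<Otimes>\<^sub>M borel). P x}"
  have A: "?A \<in> sets (borel \<Otimes>\<^sub>M borel)" using P unfolding pred_def .
  have "emeasure M {\<omega> \<in> space M. P (X \<omega>, Y \<omega>)} = emeasure (distr M (borel \<Otimes>\<^sub>M borel) (\<lambda>x. (X x, Y x))) ?A"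
    by (subst emeasure_distr[OF _ A]) (auto simp: space_pair_measure intro!: arg_cong[where f="emeasure M"])
  also have "\<dots> = emeasure (distr M borel X \<Otimes>\<^sub>M distr M borel Y) ?A" by (simp add: eq)
  also have "\<dots> = (\<integral>\<^sup>+ t. emeasure (distr M borel Y) (Pair t -` ?A) \<partial>(distr M borel X))"
    by (rule PY.emeasure_pair_measure_alt, subst sets_pair_measure_cong[OF sets_distr sets_distr], rule A)
  also have "\<dots> = (\<integral>\<^sup>+ t. emeasure M {\<omega> \<in> space M. P (t, Y \<omega>)} \<partial>(distr M borel X))"
  proof (intro nn_integral_cong)
    fix t :: real
    have "Measurable.pred borel (\<lambda>s. P (t, s))" by measurable
    then have "{s. P (t, s)} \<in> sets borel" by (simp add: pred_def)
    moreover have "Pair t -` ?A = {s. P (t, s)}" by (auto simp: space_pair_measure)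
    ultimately show "emeasure (distr M borel Y) (Pair t -` ?A) = emeasure M {\<omega> \<in> space M. P (t, Y \<omega>)}"
      by (subst emeasure_distr) (auto intro!: arg_cong[where f="emeasure M"])
  qed
  finally show ?thesis .
qed

lemma prob_Union_ge_bonferroni:
  fixes A :: "nat \<Rightarrow> 'a set"
  assumes [measurable]: "\<And>k. A k \<in> events"
  shows "(\<Sum>k<K. prob (A k)) - (\<Sum>k<K. \<Sum>j<k. prob (A j \<inter> A k)) \<le> prob (\<Union>k<K. A k)"
proof (induction K)
  case 0 then show ?case by simp
next
  case (Suc K)
  let ?U = "\<Union>k<K. A k"
  have U: "?U \<in> events" by measurable
  have "prob (?U \<union> A K) = prob ?U + prob (A K) - prob (?U \<inter> A K)"
    using U by (intro measure_Un3) (auto simp: fmeasurable_eq_sets)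
  moreover have "prob (?U \<inter> A K) \<le> (\<Sum>j<K. prob (A j \<inter> A K))"
  proof -
    have "?U \<inter> A K = (\<Union>j\<in>{..<K}. A j \<inter> A K)" by auto
    also have "prob \<dots> \<le> (\<Sum>j<K. prob (A j \<inter> A K))"
      by (rule finite_measure_subadditive_finite) auto
    finally show ?thesis .
  qed
  moreover have "(\<Union>k<Suc K. A k) = ?U \<union> A K" by (auto simp: lessThan_Suc)
  ultimately show ?case using Suc.IH by simp
qed

lemma tail_prob_tendsto_0:
  fixes X :: "'a \<Rightarrow> real"
  assumes [measurable]: "X \<in> borel_measurable M"
  shows "((\<lambda>z. prob {\<omega> \<in> space M. X \<omega> > z}) \<longlongrightarrow> 0) at_top"
proof -
  let ?P = "\<lambda>z::real. prob {\<omega> \<in> space M. X \<omega> > z}"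
  have "(\<lambda>n. ?P (real n)) \<longlonglongrightarrow> prob (\<Inter>n. {\<omega> \<in> space M. X \<omega> > real n})"
    by (rule finite_Lim_measure_decseq) (auto simp: decseq_def)
  moreover have "(\<Inter>n. {\<omega> \<in> space M. X \<omega> > real n}) = {}"
  proof -
    have "\<exists>n. \<not> X \<omega> > real n" for \<omega>
      using reals_Archimedean2[of "X \<omega>"] by (auto dest: less_imp_le simp: not_less)
    then show ?thesis by blast
  qed
  ultimately have "(\<lambda>n. ?P (real n)) \<longlonglongrightarrow> 0" by simp
  then have "(\<lambda>n. - ?P (real n)) \<longlonglongrightarrow> - 0" by (rule tendsto_minus)
  moreover have "mono (\<lambda>z. - ?P z)"
    by (auto simp: mono_def intro!: finite_measure_mono)
  ultimately have "((\<lambda>z. - ?P z) \<longlongrightarrow> - 0) at_top"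
    by (intro tendsto_at_topI_sequentially_real) auto
  then show ?thesis by (rule tendsto_minus_cancel)
qed

end

section \<open>The model and its arrival times\<close>

text \<open>\<open>p1\<close> and \<open>p2\<close> stand for the rescaled premium rates \<open>c\<^sub>i / (r \<delta>\<^sub>i)\<close>; only \<open>0 \<le> p2 \<le> p1\<close> is used.\<close>
locale risk_model = prob_space M for M :: "'a measure" +
  fixes W \<sigma> :: "nat \<Rightarrow> 'a \<Rightarrow> real"
    and V :: "'a \<Rightarrow> real"
    and r lam T \<alpha> p1 p2 :: real
    and L :: "real \<Rightarrow> real"
  assumes r: "r > 0" and lam: "lam > 0" and T: "T > 0"
    and p: "0 \<le> p2" "p2 \<le> p1"
    and indep: "indep_vars (\<lambda>_. borel)
                  (\<lambda>j. case j of Inl k \<Rightarrow> W k | Inr k \<Rightarrow> \<sigma> k) UNIV"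
    and W_exp: "\<And>k. distributed M lborel (W k) (exponential_density lam)"
    and \<sigma>_meas: "\<And>k. \<sigma> k \<in> borel_measurable M"
    and \<sigma>_nonneg: "\<And>k \<omega>. \<omega> \<in> space M \<Longrightarrow> \<sigma> k \<omega> \<ge> 0"
    and \<alpha>: "\<alpha> > 0"
    and L_sv: "slowly_varying L"
    and L_inf: "filterlim L at_top at_top"
    and \<sigma>_tail: "\<And>k x. x > 0 \<Longrightarrow> prob {\<omega> \<in> space M. \<sigma> k \<omega> > x} = L x / x powr \<alpha>"
    and V_unif: "distr M borel V = uniform_measure lborel {0<..T}"
    and V_meas: "V \<in> borel_measurable M"
    and V_indep: "indep_var borel V borel (\<sigma> 0)"
begin

declare \<sigma>_meas[measurable]

definition input_var :: "nat + nat \<Rightarrow> 'a \<Rightarrow> real" where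
  "input_var j = (case j of Inl k \<Rightarrow> W k | Inr k \<Rightarrow> \<sigma> k)"

definition \<theta> :: "nat \<Rightarrow> 'a \<Rightarrow> real" where "\<theta> k = arrival W k"

definition Fbar :: "real \<Rightarrow> real" where "Fbar x = prob {\<omega> \<in> space M. \<sigma> 0 \<omega> > x}"

lemma W_meas[measurable]: "W k \<in> borel_measurable M"
  using distributed_measurable[OF W_exp[of k]] by simp

lemma \<theta>_meas[measurable]: "\<theta> k \<in> borel_measurable M"
  unfolding \<theta>_def arrival_def by measurable

lemma indep_input_var: "indep_vars (\<lambda>_. borel) input_var UNIV"
  using indep unfolding input_var_def[abs_def] .

lemma indep_input_var_blocks:
  assumes "A \<inter> B = {}"
    and "g1 \<in> borel_measurable (PiM A (\<lambda>_. borel))"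
    and "g2 \<in> borel_measurable (PiM B (\<lambda>_. borel))"
  shows "indep_var borel (\<lambda>\<omega>. g1 (restrict (\<lambda>i. input_var i \<omega>) A))
                   borel (\<lambda>\<omega>. g2 (restrict (\<lambda>i. input_var i \<omega>) B))"
  using indep_var_compose[OF indep_var_restrict[OF indep_input_var assms(1)] assms(2,3)]
  by (simp add: comp_def)

lemma prob_input_var_blocks:
  fixes g1 g2 :: "(nat + nat \<Rightarrow> real) \<Rightarrow> real"
  assumes "A \<inter> B = {}"
    and [measurable]: "g1 \<in> borel_measurable (PiM A (\<lambda>_. borel))"
    and [measurable]: "g2 \<in> borel_measurable (PiM B (\<lambda>_. borel))"
    and [measurable]: "S1 \<in> sets borel" "S2 \<in> sets borel"
  shows "prob {\<omega> \<in> space M. g1 (restrict (\<lambda>i. input_var i \<omega>) A) \<in> S1 \<and> g2 (restrict (\<lambda>i. input_var i \<omega>) B) \<in> S2}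
    = prob {\<omega> \<in> space M. g1 (restrict (\<lambda>i. input_var i \<omega>) A) \<in> S1}
      * prob {\<omega> \<in> space M. g2 (restrict (\<lambda>i. input_var i \<omega>) B) \<in> S2}"
  using prob_indep_random_variable[OF indep_input_var_blocks[OF assms(1-3)] assms(4,5)] by simp

lemma indep_W: "indep_vars (\<lambda>_. borel) W UNIV"
proof -
  have disj: "disjoint_family_on (\<lambda>l. {Inl l}) UNIV" by (auto simp: disjoint_family_on_def)
  have "indep_vars (\<lambda>_. borel) (\<lambda>l \<omega>. (\<lambda>f. f (Inl l)) (restrict (\<lambda>i. input_var i \<omega>) {Inl l})) UNIV"
    using indep_vars_compose2[OF indep_vars_restrict[OF indep_input_var _ disj], of "\<lambda>l f. f (Inl l)" "\<lambda>_. borel"]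
    by (auto intro!: measurable_component_singleton)
  then show ?thesis
    by (rule indep_vars_cong[THEN iffD1, rotated -1]) (auto simp: input_var_def)
qed

lemma AE_W_nonneg: "AE \<omega> in M. 0 \<le> W k \<omega>"
proof -
  have "emeasure M (W k -` {..<0} \<inter> space M)
      = (\<integral>\<^sup>+ x. ennreal (exponential_density lam x) * indicator {..<0} x \<partial>lborel)"
    by (rule distributed_emeasure[OF W_exp]) auto
  also have "\<dots> = (\<integral>\<^sup>+ x. 0 \<partial>(lborel::real measure))"
    by (rule nn_integral_cong) (auto simp: exponential_density_def erlang_density_def split: split_indicator)
  finally have "emeasure M (W k -` {..<0} \<inter> space M) = 0" by simp
  moreover have "W k -` {..<0} \<inter> space M = {\<omega> \<in> space M. \<not> 0 \<le> W k \<omega>}" by auto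
  ultimately have "{\<omega> \<in> space M. \<not> 0 \<le> W k \<omega>} \<in> null_sets M"
    by (auto intro!: null_setsI)
  then show ?thesis by (rule AE_I') auto
qed

lemma prob_arrival_le:
  assumes a: "0 \<le> a"
  shows "prob {\<omega> \<in> space M. \<theta> k \<omega> \<le> a} \<le> (1 - exp (- a * lam)) ^ Suc k"
proof -
  have "AE \<omega> in M. \<forall>i. 0 \<le> W i \<omega>"
    using AE_W_nonneg by (simp add: AE_all_countable)
  then have "AE \<omega>\<in>{\<omega> \<in> space M. \<theta> k \<omega> \<le> a} in M. \<omega> \<in> (\<Inter>i\<in>{..k}. W i -` {..a} \<inter> space M)"
  proof eventually_elim
    case (elim \<omega>)
    have "W i \<omega> \<le> \<theta> k \<omega>" if "i \<le> k" for i
      unfolding \<theta>_def arrival_def using that elim by (intro member_le_sum) auto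
    then show ?case by force
  qed
  then have "prob {\<omega> \<in> space M. \<theta> k \<omega> \<le> a} \<le> prob (\<Inter>i\<in>{..k}. W i -` {..a} \<inter> space M)"
    by (intro finite_measure_mono_AE) measurable
  also have "\<dots> = (\<Prod>i\<in>{..k}. prob (W i -` {..a} \<inter> space M))"
    by (rule indep_varsD[OF indep_W]) auto
  also have "\<dots> = (\<Prod>i\<in>{..k}. 1 - exp (- a * lam))"
  proof (intro prod.cong refl)
    fix i
    show "prob (W i -` {..a} \<inter> space M) = 1 - exp (- a * lam)"
      using exponential_distributedD_le[OF W_exp[of i] a lam]
      by (simp add: vimage_def Int_def conj_commute)
  qed
  finally show ?thesis by simp
qed

lemma arrival_erlang: "distributed M lborel (\<theta> k) (erlang_density k lam)"
proof -
  have "distributed M lborel (\<lambda>x. \<Sum>i\<in>{..k}. W i x) (erlang_density (card {..k} - 1) lam)"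
    by (rule exponential_distributed_sum[OF _ _ lam W_exp indep_vars_subset[OF indep_W]]) auto
  then show ?thesis by (simp add: \<theta>_def[abs_def] arrival_def[abs_def])
qed

definition admissible :: "'a \<Rightarrow> bool" where
  "admissible \<omega> \<longleftrightarrow> (\<forall>k. 0 \<le> W k \<omega>) \<and> (\<forall>m::nat. \<exists>k. \<theta> k \<omega> > m)"

lemma AE_admissible: "AE \<omega> in M. admissible \<omega>"
proof -
  have "AE \<omega> in M. \<exists>k. \<theta> k \<omega> > real m" for m :: nat
  proof -
    let ?b = "1 - exp (- real m * lam)"
    have b: "0 \<le> ?b" "?b < 1" using lam by auto
    let ?S = "{\<omega> \<in> space M. \<forall>k. \<theta> k \<omega> \<le> real m}"
    have S: "?S \<in> events" by measurable
    have le: "prob ?S \<le> ?b ^ Suc k" for k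
      by (rule order_trans[OF finite_measure_mono prob_arrival_le]) auto
    have "prob ?S = 0"
    proof (rule ccontr)
      assume "prob ?S \<noteq> 0"
      then have "prob ?S > 0" by (simp add: zero_less_measure_iff)
      from real_arch_pow_inv[OF this b(2)] obtain n where "?b ^ n < prob ?S" by auto
      moreover have "?b ^ Suc n \<le> ?b ^ n" using b by (intro power_decreasing) auto
      ultimately show False using le[of n] by linarith
    qed
    then have "?S \<in> null_sets M" using S by (intro null_setsI) (auto simp: emeasure_eq_measure)
    then show ?thesis by (rule AE_I') (auto simp: not_less)
  qed
  then have "AE \<omega> in M. \<forall>m::nat. \<exists>k. \<theta> k \<omega> > real m"
    by (simp add: AE_all_countable)
  moreover have "AE \<omega> in M. \<forall>i. 0 \<le> W i \<omega>"
    using AE_W_nonneg by (simp add: AE_all_countable)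
  ultimately show ?thesis unfolding admissible_def by eventually_elim auto
qed

lemma admissible_arrival_mono: "admissible \<omega> \<Longrightarrow> j \<le> k \<Longrightarrow> \<theta> j \<omega> \<le> \<theta> k \<omega>"
  unfolding admissible_def \<theta>_def arrival_def by (intro sum_mono2) auto

lemma admissible_arrival_nonneg: "admissible \<omega> \<Longrightarrow> 0 \<le> \<theta> k \<omega>"
  unfolding admissible_def \<theta>_def arrival_def by (intro sum_nonneg) auto

lemma admissible_less_count_proc_iff:
  assumes g: "admissible \<omega>"
  shows "k < count_proc W t \<omega> \<longleftrightarrow> \<theta> k \<omega> \<le> t"
proof -
  obtain m :: nat where m: "t < m" using reals_Archimedean2 by blast
  from g obtain k0 where k0: "\<theta> k0 \<omega> > m" unfolding admissible_def by blast
  define n where "n = (LEAST k. \<theta> k \<omega> > t)"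
  have n1: "\<theta> n \<omega> > t" unfolding n_def by (rule LeastI[of _ k0]) (use k0 m in auto)
  have n2: "k < n \<Longrightarrow> \<theta> k \<omega> \<le> t" for k unfolding n_def using not_less_Least by fastforce
  have "{k. \<theta> k \<omega> \<le> t} = {..<n}"
  proof (intro set_eqI iffI)
    fix k assume k: "k \<in> {k. \<theta> k \<omega> \<le> t}"
    show "k \<in> {..<n}"
    proof (rule ccontr)
      assume "k \<notin> {..<n}"
      then have "\<theta> n \<omega> \<le> \<theta> k \<omega>" using admissible_arrival_mono[OF g] by simp
      with n1 k show False by simp
    qed
  qed (use n2 in auto)
  then show ?thesis unfolding count_proc_def \<theta>_def[symmetric] by auto
qed

lemma measurable_count_proc[measurable]:
  assumes [measurable]: "f \<in> borel_measurable M"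
  shows "(\<lambda>\<omega>. count_proc W (f \<omega>) \<omega>) \<in> measurable M (count_space UNIV)"
  unfolding count_proc_def \<theta>_def[symmetric] by measurable

lemma measurable_Xproc[measurable]:
  assumes [measurable]: "f \<in> borel_measurable M"
  shows "(\<lambda>\<omega>. Xproc r p x W \<sigma> (f \<omega>) \<omega>) \<in> borel_measurable M"
proof -
  have "(\<lambda>\<omega>. (\<lambda>n \<omega>. \<Sum>k<n. exp (- r * \<theta> k \<omega>) * \<sigma> k \<omega>) (count_proc W (f \<omega>) \<omega>) \<omega>) \<in> borel_measurable M"
    by (rule measurable_compose_countable[OF _ measurable_count_proc]) measurable
  then show ?thesis unfolding Xproc_def \<theta>_def[symmetric] by measurable
qed

definition ruined :: "real \<Rightarrow> real \<Rightarrow> real \<Rightarrow> 'a \<Rightarrow> bool" where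
  "ruined x1 x2 t \<omega> \<longleftrightarrow> Xproc r p1 x1 W \<sigma> t \<omega> < 0 \<and> Xproc r p2 x2 W \<sigma> t \<omega> < 0"

definition ruin_event :: "real \<Rightarrow> real \<Rightarrow> 'a set" where
  "ruin_event x1 x2 = {\<omega> \<in> space M. \<exists>t. 0 \<le> t \<and> t \<le> T \<and> ruined x1 x2 t \<omega>}"

lemma Psi_max_eq_prob_ruin_event: "Psi_max M r p1 p2 W \<sigma> x1 x2 T = prob (ruin_event x1 x2)"
  unfolding Psi_max_def ruin_event_def ruined_def ..

lemma Xproc_pos_no_claims:
  assumes "count_proc W t \<omega> = 0" "0 \<le> t" "x > 0" "p \<ge> 0"
  shows "Xproc r p x W \<sigma> t \<omega> > 0"
proof -
  have "exp (- r * t) \<le> 1" using r assms by auto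
  then have "p * (1 - exp (- r * t)) \<ge> 0" using assms by auto
  then show ?thesis using assms unfolding Xproc_def by simp
qed

text \<open>Between claims the surplus only grows, so ruin can be checked at time 0 and at the claim instants.\<close>
lemma ruin_event_at_claims:
  assumes x: "x1 > 0"
  shows "ruin_event x1 x2 = {\<omega> \<in> space M. ruined x1 x2 0 \<omega>} \<union>
     (\<Union>k. {\<omega> \<in> space M. 0 \<le> \<theta> k \<omega> \<and> \<theta> k \<omega> \<le> T \<and> ruined x1 x2 (\<theta> k \<omega>) \<omega>})"
    (is "_ = ?R")
proof
  show "?R \<subseteq> ruin_event x1 x2" unfolding ruin_event_def using T by auto
next
  show "ruin_event x1 x2 \<subseteq> ?R"
  proof
    fix \<omega> assume "\<omega> \<in> ruin_event x1 x2"
    then obtain t where \<omega>: "\<omega> \<in> space M" and t: "0 \<le> t" "t \<le> T" and Q: "ruined x1 x2 t \<omega>"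
      unfolding ruin_event_def by auto
    define S where "S = {k. \<theta> k \<omega> \<le> t}"
    have cnt: "count_proc W t \<omega> = card S" unfolding S_def count_proc_def \<theta>_def ..
    have "card S \<noteq> 0"
    proof
      assume "card S = 0"
      then have "Xproc r p1 x1 W \<sigma> t \<omega> > 0"
        using cnt t x p by (intro Xproc_pos_no_claims) auto
      with Q show False unfolding ruined_def by auto
    qed
    then have fin: "finite S" "S \<noteq> {}" using card.infinite by fastforce+
    define s where "s = Max ((\<lambda>k. \<theta> k \<omega>) ` S)"
    have s_in: "s \<in> (\<lambda>k. \<theta> k \<omega>) ` S" unfolding s_def using fin by (intro Max_in) auto
    have s_ge: "k \<in> S \<Longrightarrow> \<theta> k \<omega> \<le> s" for k unfolding s_def using fin by (intro Max_ge) auto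
    have s_le: "s \<le> t" using s_in S_def by auto
    have ruined_after_s: "ruined x1 x2 u \<omega>" if "s \<le> u" "u \<le> t" "0 \<le> u" for u
    proof -
      have "{k. \<theta> k \<omega> \<le> u} = S" using s_ge that unfolding S_def by force
      then have cu: "count_proc W u \<omega> = count_proc W t \<omega>"
        using cnt unfolding count_proc_def \<theta>_def[symmetric] by simp
      have "exp (- r * t) \<le> exp (- r * u)" using r that by auto
      then have "p' * (1 - exp (- r * u)) \<le> p' * (1 - exp (- r * t))" if "p' \<ge> 0" for p'
        using that by (intro mult_left_mono) auto
      with Q p show ?thesis unfolding ruined_def Xproc_def cu by (smt (verit))
    qed
    show "\<omega> \<in> ?R"
    proof (cases "s \<ge> 0")
      case True
      from s_in obtain k where "s = \<theta> k \<omega>" by auto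
      with True ruined_after_s[of s] s_le t \<omega> show ?thesis by auto
    next
      case False
      with ruined_after_s[of 0] t \<omega> show ?thesis by auto
    qed
  qed
qed

lemma ruin_event_sets:
  assumes "x1 > 0"
  shows "ruin_event x1 x2 \<in> events"
  unfolding ruin_event_at_claims[OF assms] ruined_def by measurable

section \<open>The claim tail and its time integral\<close>

lemma Fbar_antimono: "a \<le> b \<Longrightarrow> Fbar b \<le> Fbar a"
  unfolding Fbar_def by (intro finite_measure_mono) auto

lemma Fbar_measurable[measurable]: "Fbar \<in> borel_measurable borel"
proof -
  have "(\<lambda>x. - Fbar x) \<in> borel_measurable borel"
    by (rule borel_measurable_mono) (auto simp: mono_def Fbar_antimono)
  then have "(\<lambda>x. - (- Fbar x)) \<in> borel_measurable borel" by measurable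
  then show ?thesis by simp
qed

lemma Fbar_nonneg: "0 \<le> Fbar y" unfolding Fbar_def by simp

lemma Fbar_le_1: "Fbar y \<le> 1" unfolding Fbar_def by simp

lemma prob_claim_gt: "y > 0 \<Longrightarrow> prob {\<omega> \<in> space M. \<sigma> k \<omega> > y} = Fbar y"
  unfolding Fbar_def using \<sigma>_tail[of y k] \<sigma>_tail[of y 0] by simp

lemma emeasure_claim_gt: "y > 0 \<Longrightarrow> emeasure M {\<omega> \<in> space M. \<sigma> k \<omega> > y} = ennreal (Fbar y)"
  using prob_claim_gt[of y k] by (simp add: emeasure_eq_measure)

lemma Fbar_tendsto_0: "(Fbar \<longlongrightarrow> 0) at_top"
  unfolding Fbar_def[abs_def] by (rule tail_prob_tendsto_0) measurable

definition tail_int_nn :: "real \<Rightarrow> ennreal" where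
  "tail_int_nn y = (\<integral>\<^sup>+ t. ennreal (Fbar (y * exp (r * t))) * indicator {0..T} t \<partial>lborel)"

definition tail_int :: "real \<Rightarrow> real" where "tail_int y = enn2real (tail_int_nn y)"

lemma tail_int_nn_mono:
  assumes "\<And>t. 0 \<le> t \<Longrightarrow> t \<le> T \<Longrightarrow> Fbar (y * exp (r * t)) \<le> a * Fbar (y' * exp (r * t))" "0 \<le> a"
  shows "tail_int_nn y \<le> ennreal a * tail_int_nn y'"
proof -
  have "tail_int_nn y \<le> (\<integral>\<^sup>+ t. ennreal a * (ennreal (Fbar (y' * exp (r * t))) * indicator {0..T} t) \<partial>lborel)"
    unfolding tail_int_nn_def using assms
    by (intro nn_integral_mono) (auto split: split_indicator simp: ennreal_mult'[symmetric] Fbar_nonneg)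
  also have "\<dots> = ennreal a * tail_int_nn y'" unfolding tail_int_nn_def by (rule nn_integral_cmult) measurable
  finally show ?thesis .
qed

lemma nn_integral_const_indicator_T: "(\<integral>\<^sup>+ t. ennreal a * indicator {0..T} t \<partial>lborel) = ennreal a * ennreal T"
  using T by (subst nn_integral_cmult_indicator) auto

lemma tail_int_nn_le_T: "tail_int_nn y \<le> ennreal T"
proof -
  have "tail_int_nn y \<le> (\<integral>\<^sup>+ t. ennreal 1 * indicator {0..T} t \<partial>lborel)"
    unfolding tail_int_nn_def by (intro nn_integral_mono) (auto split: split_indicator simp: Fbar_le_1)
  then show ?thesis using nn_integral_const_indicator_T[of 1] by simp
qed

lemma tail_int_nn_eq: "tail_int_nn y = ennreal (tail_int y)"
  unfolding tail_int_def using tail_int_nn_le_T[of y]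
  by (metis ennreal_enn2real ennreal_less_top order_le_less_trans)

lemma tail_int_nonneg: "0 \<le> tail_int y" unfolding tail_int_def by simp

lemma tail_int_ge: assumes "0 \<le> y" shows "T * Fbar (y * exp (r * T)) \<le> tail_int y"
proof -
  have "(\<integral>\<^sup>+ t. ennreal (Fbar (y * exp (r * T))) * indicator {0..T} t \<partial>lborel) \<le> tail_int_nn y"
    unfolding tail_int_nn_def using assms r
    by (intro nn_integral_mono) (auto split: split_indicator intro!: ennreal_leI Fbar_antimono mult_left_mono)
  then have "ennreal (T * Fbar (y * exp (r * T))) \<le> ennreal (tail_int y)"
    using T Fbar_nonneg unfolding nn_integral_const_indicator_T tail_int_nn_eq
    by (simp add: ennreal_mult'[symmetric] mult.commute)
  then show ?thesis using tail_int_nonneg[of y] by (simp add: ennreal_le_iff)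
qed

lemma tail_int_mono:
  assumes "\<And>t. 0 \<le> t \<Longrightarrow> t \<le> T \<Longrightarrow> Fbar (y * exp (r * t)) \<le> a * Fbar (y' * exp (r * t))" "0 \<le> a"
  shows "tail_int y \<le> a * tail_int y'"
  using tail_int_nn_mono[OF assms] assms(2) tail_int_nonneg
  unfolding tail_int_nn_eq by (simp add: ennreal_mult'[symmetric])

lemma tail_int_antimono:
  assumes "0 \<le> y" "y \<le> y'"
  shows "tail_int y' \<le> tail_int y"
proof -
  have "Fbar (y' * exp (r * t)) \<le> 1 * Fbar (y * exp (r * t))" for t
    using assms by (auto intro!: Fbar_antimono mult_right_mono)
  then show ?thesis using tail_int_mono[of y' 1 y] by simp
qed

lemma emeasure_discounted_claim_gt:
  assumes y: "y > 0"
  shows "emeasure M {\<omega> \<in> space M. exp (- r * V \<omega>) * \<sigma> 0 \<omega> > y} = tail_int_nn y / ennreal T"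
proof -
  have P: "Measurable.pred (borel \<Otimes>\<^sub>M borel) (\<lambda>x::real\<times>real. exp (- r * fst x) * snd x > y)"
    by measurable
  have "emeasure M {\<omega> \<in> space M. exp (- r * V \<omega>) * \<sigma> 0 \<omega> > y} =
        (\<integral>\<^sup>+ t. emeasure M {\<omega> \<in> space M. exp (- r * t) * \<sigma> 0 \<omega> > y} \<partial>(distr M borel V))"
    using emeasure_pred_indep_pair[OF V_indep P] by simp
  also have "\<dots> = (\<integral>\<^sup>+ t. ennreal (Fbar (y * exp (r * t))) \<partial>(distr M borel V))"
  proof (intro nn_integral_cong)
    fix t
    have "{\<omega> \<in> space M. exp (- r * t) * \<sigma> 0 \<omega> > y} = {\<omega> \<in> space M. \<sigma> 0 \<omega> > y * exp (r * t)}"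
      by (auto simp: exp_minus field_simps)
    then show "emeasure M {\<omega> \<in> space M. exp (- r * t) * \<sigma> 0 \<omega> > y} = ennreal (Fbar (y * exp (r * t)))"
      using emeasure_claim_gt[of "y * exp (r * t)" 0] y by simp
  qed
  also have "\<dots> = (\<integral>\<^sup>+ t. ennreal (Fbar (y * exp (r * t))) * indicator {0<..T} t \<partial>lborel) / emeasure lborel {0<..T}"
    unfolding V_unif by (rule nn_integral_uniform_measure) auto
  also have "(\<integral>\<^sup>+ t. ennreal (Fbar (y * exp (r * t))) * indicator {0<..T} t \<partial>lborel) = tail_int_nn y"
    unfolding tail_int_nn_def
    by (intro nn_integral_cong_AE) (use AE_lborel_singleton[of 0] in \<open>eventually_elim, simp split: split_indicator\<close>)
  finally show ?thesis using T by simp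
qed

lemma prob_discounted_claim_gt:
  assumes "x > 0"
  shows "prob {\<omega> \<in> space M. exp (- r * V \<omega>) * \<sigma> 0 \<omega> > x} = tail_int x / T"
proof -
  have "emeasure M {\<omega> \<in> space M. exp (- r * V \<omega>) * \<sigma> 0 \<omega> > x} = ennreal (tail_int x / T)"
    using emeasure_discounted_claim_gt[OF assms] T tail_int_nonneg[of x]
    unfolding tail_int_nn_eq by (simp add: divide_ennreal)
  then show ?thesis using T tail_int_nonneg[of x] by (simp add: emeasure_eq_measure)
qed

lemma indep_arrival_claim: "indep_var borel (\<theta> k) borel (\<sigma> j)"
proof -
  have "indep_var borel (\<lambda>\<omega>. (\<lambda>f. \<Sum>i\<le>k. f (Inl i)) (restrict (\<lambda>i. input_var i \<omega>) (Inl ` {..k})))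
          borel (\<lambda>\<omega>. (\<lambda>f. f (Inr j)) (restrict (\<lambda>i. input_var i \<omega>) {Inr j}))"
    by (rule indep_input_var_blocks) (auto intro!: borel_measurable_sum measurable_component_singleton)
  then show ?thesis by (simp add: input_var_def \<theta>_def arrival_def[abs_def])
qed

lemma prob_two_claims_gt:
  assumes "j \<noteq> k" "a > 0"
  shows "prob {\<omega> \<in> space M. \<sigma> j \<omega> > a \<and> \<sigma> k \<omega> > a} = Fbar a * Fbar a"
proof -
  have "prob {\<omega> \<in> space M. (\<lambda>f. f (Inr j)) (restrict (\<lambda>i. input_var i \<omega>) {Inr j}) \<in> {a<..}
                          \<and> (\<lambda>f. f (Inr k)) (restrict (\<lambda>i. input_var i \<omega>) {Inr k}) \<in> {a<..}}
    = prob {\<omega> \<in> space M. (\<lambda>f. f (Inr j)) (restrict (\<lambda>i. input_var i \<omega>) {Inr j}) \<in> {a<..}}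
      * prob {\<omega> \<in> space M. (\<lambda>f. f (Inr k)) (restrict (\<lambda>i. input_var i \<omega>) {Inr k}) \<in> {a<..}}"
    using assms(1) by (intro prob_input_var_blocks) (auto intro!: measurable_component_singleton)
  then show ?thesis using prob_claim_gt[OF assms(2), of j] prob_claim_gt[OF assms(2), of k]
    by (simp add: input_var_def)
qed

lemma prob_arrival_le_claim_gt:
  assumes "b > 0"
  shows "prob {\<omega> \<in> space M. \<theta> i \<omega> \<le> T \<and> \<sigma> k \<omega> > b} = prob {\<omega> \<in> space M. \<theta> i \<omega> \<le> T} * Fbar b"
proof -
  have "prob {\<omega> \<in> space M. (\<lambda>f. \<Sum>l\<le>i. f (Inl l)) (restrict (\<lambda>i. input_var i \<omega>) (Inl ` {..i})) \<in> {..T}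
                          \<and> (\<lambda>f. f (Inr k)) (restrict (\<lambda>i. input_var i \<omega>) {Inr k}) \<in> {b<..}}
    = prob {\<omega> \<in> space M. (\<lambda>f. \<Sum>l\<le>i. f (Inl l)) (restrict (\<lambda>i. input_var i \<omega>) (Inl ` {..i})) \<in> {..T}}
      * prob {\<omega> \<in> space M. (\<lambda>f. f (Inr k)) (restrict (\<lambda>i. input_var i \<omega>) {Inr k}) \<in> {b<..}}"
    by (intro prob_input_var_blocks) (auto intro!: measurable_component_singleton borel_measurable_sum)
  then show ?thesis using prob_claim_gt[OF assms(1), of k] by (simp add: input_var_def \<theta>_def arrival_def)
qed

lemma prob_arrival_le_two_claims_gt:
  assumes "j < k" "y > 0"
  shows "prob {\<omega> \<in> space M. \<theta> k \<omega> \<le> T \<and> \<sigma> j \<omega> > y \<and> \<sigma> k \<omega> > y}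
         = prob {\<omega> \<in> space M. \<theta> k \<omega> \<le> T} * Fbar y * Fbar y"
proof -
  let ?g = "\<lambda>f. if (\<Sum>l\<le>k. f (Inl l)) \<le> T \<and> f (Inr j) > y then 1 else (0::real)"
  let ?A = "Inl ` {..k} \<union> {Inr j}"
  have "prob {\<omega> \<in> space M. ?g (restrict (\<lambda>i. input_var i \<omega>) ?A) \<in> {1}
                          \<and> (\<lambda>f. f (Inr k)) (restrict (\<lambda>i. input_var i \<omega>) {Inr k}) \<in> {y<..}}
    = prob {\<omega> \<in> space M. ?g (restrict (\<lambda>i. input_var i \<omega>) ?A) \<in> {1}}
      * prob {\<omega> \<in> space M. (\<lambda>f. f (Inr k)) (restrict (\<lambda>i. input_var i \<omega>) {Inr k}) \<in> {y<..}}"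
    using assms(1) by (intro prob_input_var_blocks) (auto intro!: measurable_component_singleton borel_measurable_sum)
  also have "{\<omega> \<in> space M. ?g (restrict (\<lambda>i. input_var i \<omega>) ?A) \<in> {1}}
             = {\<omega> \<in> space M. \<theta> k \<omega> \<le> T \<and> \<sigma> j \<omega> > y}"
    by (auto simp: input_var_def \<theta>_def arrival_def)
  also have "{\<omega> \<in> space M. ?g (restrict (\<lambda>i. input_var i \<omega>) ?A) \<in> {1}
                          \<and> (\<lambda>f. f (Inr k)) (restrict (\<lambda>i. input_var i \<omega>) {Inr k}) \<in> {y<..}}
             = {\<omega> \<in> space M. \<theta> k \<omega> \<le> T \<and> \<sigma> j \<omega> > y \<and> \<sigma> k \<omega> > y}"
    by (auto simp: input_var_def \<theta>_def arrival_def)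
  also have "prob {\<omega> \<in> space M. (\<lambda>f. f (Inr k)) (restrict (\<lambda>i. input_var i \<omega>) {Inr k}) \<in> {y<..}} = Fbar y"
    using prob_claim_gt[OF assms(2), of k] by (simp add: input_var_def)
  finally show ?thesis using prob_arrival_le_claim_gt[OF assms(2), of k j] by simp
qed

definition big_claim :: "real \<Rightarrow> nat \<Rightarrow> 'a set" where
  "big_claim y k = {\<omega> \<in> space M. \<theta> k \<omega> \<le> T \<and> exp (- r * \<theta> k \<omega>) * \<sigma> k \<omega> > y}"

lemma big_claim_sets[measurable]: "big_claim y k \<in> events"
  unfolding big_claim_def by measurable

lemma emeasure_big_claim:
  assumes y: "y > 0"
  shows "emeasure M (big_claim y k) =
    (\<integral>\<^sup>+ t. ennreal (erlang_density k lam t) * (ennreal (Fbar (y * exp (r * t))) * indicator {..T} t) \<partial>lborel)"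
proof -
  have P: "Measurable.pred (borel \<Otimes>\<^sub>M borel) (\<lambda>x::real\<times>real. fst x \<le> T \<and> exp (- r * fst x) * snd x > y)"
    by measurable
  have "emeasure M (big_claim y k) =
        (\<integral>\<^sup>+ t. emeasure M {\<omega> \<in> space M. t \<le> T \<and> exp (- r * t) * \<sigma> k \<omega> > y} \<partial>(distr M borel (\<theta> k)))"
    using emeasure_pred_indep_pair[OF indep_arrival_claim P] by (simp add: big_claim_def)
  also have "\<dots> = (\<integral>\<^sup>+ t. ennreal (Fbar (y * exp (r * t))) * indicator {..T} t \<partial>(distr M borel (\<theta> k)))"
  proof (intro nn_integral_cong)
    fix t
    have "{\<omega> \<in> space M. t \<le> T \<and> exp (- r * t) * \<sigma> k \<omega> > y}
          = (if t \<le> T then {\<omega> \<in> space M. \<sigma> k \<omega> > y * exp (r * t)} else {})"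
      by (auto simp: exp_minus field_simps)
    then show "emeasure M {\<omega> \<in> space M. t \<le> T \<and> exp (- r * t) * \<sigma> k \<omega> > y}
               = ennreal (Fbar (y * exp (r * t))) * indicator {..T} t"
      using emeasure_claim_gt[of "y * exp (r * t)" k] y by (simp split: split_indicator)
  qed
  also have "distr M borel (\<theta> k) = density lborel (erlang_density k lam)"
    using distributed_distr_eq_density[OF arrival_erlang[of k]]
    by (metis distr_cong sets_lborel space_lborel space_borel)
  finally show ?thesis by (simp add: nn_integral_density)
qed

lemma suminf_emeasure_big_claim:
  assumes y: "y > 0"
  shows "(\<Sum>k. emeasure M (big_claim y k)) = ennreal lam * tail_int_nn y"
proof -
  have "(\<Sum>k. emeasure M (big_claim y k)) =
    (\<integral>\<^sup>+ t. (\<Sum>k. ennreal (erlang_density k lam t) * (ennreal (Fbar (y * exp (r * t))) * indicator {..T} t)) \<partial>lborel)"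
    unfolding emeasure_big_claim[OF y] by (rule nn_integral_suminf[symmetric]) measurable
  also have "\<dots> = (\<integral>\<^sup>+ t. ennreal lam * (ennreal (Fbar (y * exp (r * t))) * indicator {0..T} t) \<partial>lborel)"
    by (intro nn_integral_cong)
       (simp add: ennreal_suminf_multc suminf_erlang_density[OF lam] split: split_indicator)
  also have "\<dots> = ennreal lam * tail_int_nn y"
    unfolding tail_int_nn_def by (rule nn_integral_cmult) measurable
  finally show ?thesis .
qed

lemma sums_prob_big_claim:
  assumes y: "y > 0"
  shows "(\<lambda>k. prob (big_claim y k)) sums (lam * tail_int y)"
proof -
  have "(\<lambda>k. emeasure M (big_claim y k)) sums (\<Sum>k. emeasure M (big_claim y k))"
    by (rule summable_sums) simp
  then have "(\<lambda>k. ennreal (prob (big_claim y k))) sums ennreal (lam * tail_int y)"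
    using suminf_emeasure_big_claim[OF y] lam tail_int_nonneg[of y]
    by (simp add: emeasure_eq_measure tail_int_nn_eq ennreal_mult'[symmetric])
  then show ?thesis using lam tail_int_nonneg[of y] by (simp add: sums_ennreal)
qed

section \<open>Regular variation\<close>

lemma Fbar_eq: "z > 0 \<Longrightarrow> Fbar z = L z / z powr \<alpha>"
  using \<sigma>_tail[of z 0] unfolding Fbar_def by simp

lemma eventually_L_pos: "\<forall>\<^sub>F z in at_top. L z > 0"
  using L_sv unfolding slowly_varying_def by auto

lemma eventually_Fbar_pos: "\<forall>\<^sub>F z in at_top. Fbar z > 0"
  using eventually_L_pos eventually_gt_at_top[of 0] by eventually_elim (simp add: Fbar_eq)

lemma eventually_powr_le_Fbar: "\<forall>\<^sub>F x in at_top. x powr - \<alpha> \<le> Fbar x"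
proof -
  have "\<forall>\<^sub>F x in at_top. L x \<ge> 1"
    using L_inf unfolding filterlim_at_top by blast
  with eventually_gt_at_top[of 0] show ?thesis
    by eventually_elim (simp add: Fbar_eq powr_minus_divide divide_right_mono)
qed

lemma Fbar_regularly_varying:
  assumes c: "c > 0"
  shows "((\<lambda>z. Fbar (c * z) / Fbar z) \<longlongrightarrow> c powr - \<alpha>) at_top"
proof -
  have lim: "((\<lambda>z. L (c * z) / L z * c powr - \<alpha>) \<longlongrightarrow> 1 * c powr - \<alpha>) at_top"
    using L_sv c unfolding slowly_varying_def by (intro tendsto_mult) auto
  have "\<forall>\<^sub>F z in at_top. L (c * z) / L z * c powr - \<alpha> = Fbar (c * z) / Fbar z"
    using eventually_L_pos eventually_gt_at_top[of 0]
  proof eventually_elim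
    case (elim z)
    then have "c * z > 0" using c by auto
    then show ?case using elim c
      by (simp add: Fbar_eq powr_mult powr_minus field_simps)
  qed
  with lim show ?thesis by (auto elim: Lim_transform_eventually)
qed

lemma eventually_Fbar_ratio_bounds:
  assumes c: "c > 0" and \<eta>: "\<eta> > 0"
  shows "\<forall>\<^sub>F z in at_top. Fbar (c * z) \<le> (1 + \<eta>) * c powr - \<alpha> * Fbar z
                          \<and> (1 - \<eta>) * c powr - \<alpha> * Fbar z \<le> Fbar (c * z)"
proof -
  have cp: "c powr - \<alpha> > 0" using c by simp
  have "\<forall>\<^sub>F z in at_top. dist (Fbar (c * z) / Fbar z) (c powr - \<alpha>) < \<eta> * c powr - \<alpha>"
    using Fbar_regularly_varying[OF c] \<eta> cp by (auto simp: tendsto_iff)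
  with eventually_Fbar_pos show ?thesis
  proof eventually_elim
    case (elim z)
    then have "\<bar>Fbar (c * z) / Fbar z - c powr - \<alpha>\<bar> < \<eta> * c powr - \<alpha>" by (simp add: dist_real_def)
    then have "Fbar (c * z) / Fbar z \<le> (1 + \<eta>) * c powr - \<alpha>"
      "(1 - \<eta>) * c powr - \<alpha> \<le> Fbar (c * z) / Fbar z"
      by (auto simp: algebra_simps)
    then show ?case using elim by (auto simp: field_simps)
  qed
qed

lemma Fbar_halving_bound: "\<exists>z0\<ge>0. \<forall>z\<ge>z0. Fbar (z / 2) \<le> 2 powr (\<alpha> + 1) * Fbar z"
proof -
  have K_eq: "(1 + 1) * (1/2::real) powr - \<alpha> = 2 powr (\<alpha> + 1)"
    by (simp add: powr_add powr_minus_divide powr_divide)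
  have "\<forall>\<^sub>F z in at_top. Fbar ((1/2) * z) \<le> (1 + 1) * (1/2) powr - \<alpha> * Fbar z"
    using eventually_Fbar_ratio_bounds[of "1/2" 1] by (auto elim: eventually_mono)
  then have "\<forall>\<^sub>F z in at_top. Fbar (z / 2) \<le> 2 powr (\<alpha> + 1) * Fbar z"
  proof eventually_elim
    case (elim z)
    then show ?case unfolding K_eq[symmetric] by (simp add: mult.commute)
  qed
  then obtain N where "\<And>z. z \<ge> N \<Longrightarrow> Fbar (z / 2) \<le> 2 powr (\<alpha> + 1) * Fbar z"
    unfolding eventually_at_top_linorder by blast
  then show ?thesis by (intro exI[of _ "max N 0"]) auto
qed

lemma potter_bound:
  "\<exists>C>0. \<forall>\<^sub>F x in at_top. \<forall>u\<ge>1. Fbar (x / u) \<le> C * u powr (\<alpha> + 1) * Fbar x"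
proof -
  define K where "K = (2::real) powr (\<alpha> + 1)"
  have K: "K > 0" unfolding K_def by simp
  obtain z0 where z0: "z0 \<ge> 0" and half: "\<And>z. z \<ge> z0 \<Longrightarrow> Fbar (z / 2) \<le> K * Fbar z"
    using Fbar_halving_bound unfolding K_def by blast
  define C where "C = K + (2 * z0) powr \<alpha>"
  have C: "C > 0" unfolding C_def using K by (simp add: add_pos_nonneg)
  have "\<forall>\<^sub>F x in at_top. \<forall>u\<ge>1. Fbar (x / u) \<le> C * u powr (\<alpha> + 1) * Fbar x"
    using eventually_powr_le_Fbar eventually_Fbar_pos eventually_gt_at_top[of 0]
  proof eventually_elim
    case (elim x)
    show ?case
    proof (intro allI impI)
      fix u :: real assume u: "u \<ge> 1"
      obtain j :: nat where j: "u \<le> 2 ^ j" "2 ^ j < 2 * u" using exists_power2_between[OF u] by blast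
      have "Fbar (x / u) \<le> Fbar (x / 2 ^ j)"
        using j u elim by (intro Fbar_antimono divide_left_mono) auto
      show "Fbar (x / u) \<le> C * u powr (\<alpha> + 1) * Fbar x"
      proof (cases "x / 2 ^ j \<ge> z0")
        case True
        have "Fbar (x / u) \<le> K ^ j * Fbar x"
          using halving_bound_iterate[where f = Fbar, OF less_imp_le[OF K] z0 half True] \<open>Fbar (x / u) \<le> Fbar (x / 2 ^ j)\<close> by linarith
        also have "K ^ j = (2 ^ j) powr (\<alpha> + 1)"
          unfolding K_def by (simp add: powr_realpow[symmetric] powr_powr mult.commute)
        also have "\<dots> \<le> (2 * u) powr (\<alpha> + 1)" using j \<alpha> by (intro powr_mono2) auto
        also have "\<dots> = K * u powr (\<alpha> + 1)" unfolding K_def using u by (simp add: powr_mult)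
        also have "\<dots> \<le> C * u powr (\<alpha> + 1)" unfolding C_def by (intro mult_right_mono) auto
        finally show ?thesis using elim by (simp add: mult_right_mono)
      next
        case False
        then have "x < 2 ^ j * z0" by (simp add: field_simps)
        also have "\<dots> \<le> 2 * u * z0" using j z0 by (intro mult_right_mono) auto
        finally have "x < (2 * z0) * u" by (simp add: mult_ac)
        have "Fbar (x / u) \<le> 1" by (rule Fbar_le_1)
        also have "1 \<le> (2 * z0) powr \<alpha> * u powr (\<alpha> + 1) * Fbar x"
          by (rule one_le_powr_bound) (use \<open>x < (2 * z0) * u\<close> elim u \<alpha> in auto)
        also have "\<dots> \<le> C * u powr (\<alpha> + 1) * Fbar x"
          unfolding C_def using K elim by (intro mult_right_mono) auto
        finally show ?thesis .
      qed
    qed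
  qed
  with C show ?thesis by blast
qed

lemma eventually_tail_int_ratio_bounds:
  assumes c: "c > 0" and \<eta>: "0 < \<eta>" "\<eta> < 1"
  shows "\<forall>\<^sub>F y in at_top. tail_int (c * y) \<le> (1 + \<eta>) * c powr - \<alpha> * tail_int y
                          \<and> (1 - \<eta>) * c powr - \<alpha> * tail_int y \<le> tail_int (c * y)"
proof -
  obtain N where N: "\<And>z. z \<ge> N \<Longrightarrow> Fbar (c * z) \<le> (1 + \<eta>) * c powr - \<alpha> * Fbar z
                                    \<and> (1 - \<eta>) * c powr - \<alpha> * Fbar z \<le> Fbar (c * z)"
    using eventually_Fbar_ratio_bounds[OF c \<eta>(1)] unfolding eventually_at_top_linorder by blast
  have shifted: "y * exp (r * t) \<ge> N" if "y \<ge> max N 0" "0 \<le> t" for y t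
    using that r by (smt (verit) mult_le_cancel_left1 one_le_exp_iff zero_le_mult_iff max.bounded_iff)
  have "tail_int (c * y) \<le> (1 + \<eta>) * c powr - \<alpha> * tail_int y
        \<and> (1 - \<eta>) * c powr - \<alpha> * tail_int y \<le> tail_int (c * y)" if y: "y \<ge> max N 0" for y
  proof
    show "tail_int (c * y) \<le> (1 + \<eta>) * c powr - \<alpha> * tail_int y"
      by (rule tail_int_mono) (use N shifted y \<eta> in \<open>auto simp: mult.assoc\<close>)
    have "tail_int y \<le> (1 / ((1 - \<eta>) * c powr - \<alpha>)) * tail_int (c * y)"
    proof (rule tail_int_mono)
      fix t assume "0 \<le> t" "t \<le> T"
      then have "(1 - \<eta>) * c powr - \<alpha> * Fbar (y * exp (r * t)) \<le> Fbar (c * (y * exp (r * t)))"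
        using N shifted y by blast
      then show "Fbar (y * exp (r * t)) \<le> 1 / ((1 - \<eta>) * c powr - \<alpha>) * Fbar (c * y * exp (r * t))"
        using \<eta> c by (simp add: field_simps mult.assoc)
    qed (use \<eta> c in auto)
    then show "(1 - \<eta>) * c powr - \<alpha> * tail_int y \<le> tail_int (c * y)"
      using \<eta> c by (simp add: field_simps)
  qed
  then show ?thesis unfolding eventually_at_top_linorder by blast
qed

lemma eventually_tail_int_shift_lower:
  assumes \<eta>: "0 < \<eta>" "\<eta> \<le> 1" and q: "0 \<le> q"
  shows "\<forall>\<^sub>F y in at_top. (1 - \<eta>) * tail_int y \<le> tail_int (y + q)"
proof -
  obtain \<epsilon> where \<epsilon>: "0 < \<epsilon>" "1 - \<eta> / 2 \<le> (1 + \<epsilon>) powr - \<alpha>"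
    using powr_minus_near_one[of "\<eta> / 2" \<alpha>] \<eta> by auto
  have "\<forall>\<^sub>F y in at_top. (1 - \<eta> / 2) * (1 + \<epsilon>) powr - \<alpha> * tail_int y \<le> tail_int ((1 + \<epsilon>) * y)"
    using eventually_tail_int_ratio_bounds[of "1 + \<epsilon>" "\<eta> / 2"] \<epsilon> \<eta> by (auto elim: eventually_mono)
  moreover have "\<forall>\<^sub>F y in at_top. q / \<epsilon> \<le> y" by (rule eventually_ge_at_top)
  ultimately show ?thesis using eventually_ge_at_top[of 0]
  proof eventually_elim
    case (elim y)
    have "q \<le> \<epsilon> * y" using elim(2) \<epsilon> by (simp add: field_simps)
    have "(1 - \<eta>) * tail_int y \<le> (1 - \<eta> / 2) * (1 - \<eta> / 2) * tail_int y"
      using tail_int_nonneg[of y] by (intro mult_right_mono) (auto simp: algebra_simps)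
    also have "\<dots> \<le> (1 - \<eta> / 2) * (1 + \<epsilon>) powr - \<alpha> * tail_int y"
      using \<epsilon> \<eta> tail_int_nonneg[of y] by (intro mult_right_mono mult_left_mono) auto
    also have "\<dots> \<le> tail_int ((1 + \<epsilon>) * y)" by (rule elim(1))
    also have "\<dots> \<le> tail_int (y + q)"
      using \<open>q \<le> \<epsilon> * y\<close> elim(3) q by (intro tail_int_antimono) (auto simp: algebra_simps)
    finally show ?case .
  qed
qed

lemma tail_int_shrink_upper:
  assumes \<eta>: "0 < \<eta>" "\<eta> \<le> 1"
  obtains \<epsilon> where "0 < \<epsilon>" "\<epsilon> < 1" "\<forall>\<^sub>F y in at_top. tail_int ((1 - \<epsilon>) * y) \<le> (1 + \<eta>) * tail_int y"
proof -
  obtain \<epsilon> where \<epsilon>: "0 < \<epsilon>" "\<epsilon> \<le> 1/2" "(1 - \<epsilon>) powr - \<alpha> \<le> 1 + \<eta> / 3"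
    using powr_minus_near_one[of "\<eta> / 3" \<alpha>] \<eta> by auto
  have "\<forall>\<^sub>F y in at_top. tail_int ((1 - \<epsilon>) * y) \<le> (1 + \<eta> / 3) * (1 - \<epsilon>) powr - \<alpha> * tail_int y"
    using eventually_tail_int_ratio_bounds[of "1 - \<epsilon>" "\<eta> / 3"] \<epsilon> \<eta> by (auto elim: eventually_mono)
  then have "\<forall>\<^sub>F y in at_top. tail_int ((1 - \<epsilon>) * y) \<le> (1 + \<eta>) * tail_int y"
  proof eventually_elim
    case (elim y)
    have "(1 + \<eta> / 3) * (1 - \<epsilon>) powr - \<alpha> * tail_int y \<le> (1 + \<eta> / 3) * (1 + \<eta> / 3) * tail_int y"
      using \<epsilon> \<eta> tail_int_nonneg[of y] by (intro mult_right_mono mult_left_mono) auto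
    also have "\<dots> \<le> (1 + \<eta>) * tail_int y"
    proof (rule mult_right_mono[OF _ tail_int_nonneg])
      have "\<eta> / 3 * (\<eta> / 3) \<le> \<eta> / 3" using \<eta> by (intro mult_left_le) auto
      then show "(1 + \<eta> / 3) * (1 + \<eta> / 3) \<le> 1 + \<eta>" unfolding ring_distribs by linarith
    qed
    finally show ?case using elim by linarith
  qed
  with \<epsilon> that show ?thesis by auto
qed

lemma Fbar_le_tail_int:
  assumes c: "c > 0"
  shows "\<exists>G>0. \<forall>\<^sub>F y in at_top. Fbar (c * y) \<le> G * tail_int y"
proof -
  define q where "q = exp (r * T) / c"
  have q: "q > 0" unfolding q_def using c by simp
  define G where "G = 2 * q powr \<alpha> / T"
  have G: "G > 0" unfolding G_def using q T by simp
  have "\<forall>\<^sub>F w in at_top. (1 - 1/2) * q powr - \<alpha> * Fbar w \<le> Fbar (q * w)"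
    using eventually_Fbar_ratio_bounds[of q "1/2"] q by (auto elim: eventually_mono)
  then have "\<forall>\<^sub>F y in at_top. (1/2) * q powr - \<alpha> * Fbar (c * y) \<le> Fbar (q * (c * y))"
    using eventually_at_top_scale[OF c] by auto
  then have "\<forall>\<^sub>F y in at_top. Fbar (c * y) \<le> G * tail_int y"
    using eventually_ge_at_top[of 0]
  proof eventually_elim
    case (elim y)
    have "q * (c * y) = y * exp (r * T)" unfolding q_def using c by simp
    have "Fbar (c * y) = 2 * q powr \<alpha> * ((1 - 1/2) * q powr - \<alpha> * Fbar (c * y))"
      using q by (simp add: powr_minus)
    also have "\<dots> \<le> 2 * q powr \<alpha> * Fbar (y * exp (r * T))"
      using elim(1) \<open>q * (c * y) = y * exp (r * T)\<close> by (intro mult_left_mono) auto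
    also have "\<dots> \<le> 2 * q powr \<alpha> * (tail_int y / T)"
      using tail_int_ge[OF elim(2)] T by (intro mult_left_mono) (auto simp: field_simps)
    finally show ?case unfolding G_def by (simp add: field_simps)
  qed
  with G show ?thesis by blast
qed

lemma eventually_tail_int_pos: "\<forall>\<^sub>F y in at_top. tail_int y > 0"
proof -
  obtain G where G: "G > 0" "\<forall>\<^sub>F y in at_top. Fbar (1 * y) \<le> G * tail_int y"
    using Fbar_le_tail_int[of 1] by auto
  from G(2) eventually_Fbar_pos show ?thesis
  proof eventually_elim
    case (elim y)
    then have "0 < G * tail_int y" by simp
    with G(1) show ?case by (simp add: zero_less_mult_iff)
  qed
qed

lemma Fbar_sq_negligible:
  assumes c: "c > 0" and \<kappa>: "\<kappa> > 0"
  shows "\<forall>\<^sub>F y in at_top. Fbar (c * y) * Fbar (c * y) \<le> \<kappa> * tail_int y"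
proof -
  obtain G where G: "G > 0" "\<forall>\<^sub>F y in at_top. Fbar (c * y) \<le> G * tail_int y"
    using Fbar_le_tail_int[OF c] by blast
  have "\<forall>\<^sub>F z in at_top. Fbar z < \<kappa> / G"
    using order_tendstoD(2)[OF Fbar_tendsto_0] \<kappa> G(1) by simp
  then have "\<forall>\<^sub>F y in at_top. Fbar (c * y) < \<kappa> / G"
    by (rule eventually_at_top_scale[OF c])
  with G(2) show ?thesis
  proof eventually_elim
    case (elim y)
    have "Fbar (c * y) * Fbar (c * y) \<le> (\<kappa> / G) * (G * tail_int y)"
      using elim Fbar_nonneg G(1) \<kappa> by (intro mult_mono) auto
    then show ?case using G(1) by simp
  qed
qed

section \<open>Lower bound\<close>

lemma discounted_claim_le_claim:
  "admissible \<omega> \<Longrightarrow> \<omega> \<in> space M \<Longrightarrow> exp (- r * \<theta> k \<omega>) * \<sigma> k \<omega> \<le> \<sigma> k \<omega>"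
  using admissible_arrival_nonneg[of \<omega> k] r \<sigma>_nonneg[of \<omega> k] by (intro mult_left_le_one_le) auto

lemma big_claim_ruin:
  assumes x: "0 < x1" "x1 \<le> x2" and g: "admissible \<omega>" and A: "\<omega> \<in> big_claim (x2 + p1) k"
  shows "\<omega> \<in> ruin_event x1 x2"
proof -
  define t where "t = \<theta> k \<omega>"
  have \<omega>: "\<omega> \<in> space M" and tT: "t \<le> T" and Yk: "exp (- r * t) * \<sigma> k \<omega> > x2 + p1"
    using A unfolding big_claim_def t_def by auto
  have t0: "0 \<le> t" unfolding t_def by (rule admissible_arrival_nonneg[OF g])
  have kc: "k < count_proc W t \<omega>" using admissible_less_count_proc_iff[OF g] unfolding t_def by simp
  let ?S = "\<Sum>i<count_proc W t \<omega>. exp (- r * arrival W i \<omega>) * \<sigma> i \<omega>"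
  have "exp (- r * arrival W k \<omega>) * \<sigma> k \<omega> \<le> ?S"
    using kc \<sigma>_nonneg[OF \<omega>] by (intro member_le_sum) auto
  then have S: "?S > x2 + p1" using Yk by (simp add: \<theta>_def t_def)
  have e: "0 \<le> 1 - exp (- r * t)" "1 - exp (- r * t) \<le> 1" using t0 r by auto
  have "p1 * (1 - exp (- r * t)) \<le> p1" "p2 * (1 - exp (- r * t)) \<le> p2"
    using e p by (auto intro!: mult_left_le)
  then have "ruined x1 x2 t \<omega>" unfolding ruined_def Xproc_def using S p x by linarith
  then show ?thesis unfolding ruin_event_def using \<omega> t0 tT by auto
qed

text \<open>\<open>\<rho> = P{W \<le> T}\<close>, so \<open>P{\<theta>\<^sub>k \<le> T} \<le> \<rho>\<^bsup>k+1\<^esup>\<close>; splitting \<open>\<rho>\<^sup>k = s\<^sup>k s\<^sup>k\<close> makes the double sums geometric.\<close>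
definition \<rho> :: real where "\<rho> = 1 - exp (- T * lam)"

definition s :: real where "s = sqrt \<rho>"

lemma \<rho>_bounds: "0 < \<rho>" "\<rho> < 1" unfolding \<rho>_def using T lam by auto

lemma s_bounds: "0 < s" "s < 1" unfolding s_def using \<rho>_bounds by auto

lemma prob_arrival_le_T: "prob {\<omega> \<in> space M. \<theta> k \<omega> \<le> T} \<le> \<rho> ^ Suc k"
  unfolding \<rho>_def using prob_arrival_le[of T k] T by simp

lemma \<rho>_power_le: "j \<le> k \<Longrightarrow> \<rho> ^ Suc k \<le> s ^ j * s ^ k"
proof -
  assume jk: "j \<le> k"
  have "\<rho> ^ Suc k \<le> \<rho> ^ k" using \<rho>_bounds by (intro power_decreasing) auto
  also have "\<rho> ^ k = s ^ k * s ^ k" unfolding s_def using \<rho>_bounds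
    by (simp add: power_mult_distrib[symmetric])
  also have "\<dots> \<le> s ^ j * s ^ k" using s_bounds jk by (intro mult_right_mono power_decreasing) auto
  finally show ?thesis .
qed

lemma sum_s_power_le: "(\<Sum>j<n. s ^ j) \<le> 1 / (1 - s)"
  using s_bounds by (simp add: sum_gp_strict field_simps)

lemma prob_big_claim_pair_le:
  assumes jk: "j < k" and y: "y > 0"
  shows "prob (big_claim y j \<inter> big_claim y k) \<le> s ^ j * s ^ k * (Fbar y * Fbar y)"
proof -
  have "AE \<omega>\<in>big_claim y j \<inter> big_claim y k in M. \<omega> \<in> {\<omega> \<in> space M. \<theta> k \<omega> \<le> T \<and> \<sigma> j \<omega> > y \<and> \<sigma> k \<omega> > y}"
    using AE_admissible
  proof eventually_elim
    case (elim \<omega>)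
    show ?case
    proof
      assume a: "\<omega> \<in> big_claim y j \<inter> big_claim y k"
      then have \<omega>: "\<omega> \<in> space M" unfolding big_claim_def by auto
      show "\<omega> \<in> {\<omega> \<in> space M. \<theta> k \<omega> \<le> T \<and> \<sigma> j \<omega> > y \<and> \<sigma> k \<omega> > y}"
        using a discounted_claim_le_claim[OF elim \<omega>, of j] discounted_claim_le_claim[OF elim \<omega>, of k] \<omega>
        unfolding big_claim_def by auto
    qed
  qed
  then have "prob (big_claim y j \<inter> big_claim y k) \<le> prob {\<omega> \<in> space M. \<theta> k \<omega> \<le> T \<and> \<sigma> j \<omega> > y \<and> \<sigma> k \<omega> > y}"
    by (intro finite_measure_mono_AE) measurable
  also have "\<dots> = prob {\<omega> \<in> space M. \<theta> k \<omega> \<le> T} * (Fbar y * Fbar y)"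
    using prob_arrival_le_two_claims_gt[OF jk y] by (simp add: mult.assoc)
  also have "\<dots> \<le> \<rho> ^ Suc k * (Fbar y * Fbar y)"
    using prob_arrival_le_T[of k] Fbar_nonneg[of y] by (intro mult_right_mono) auto
  also have "\<dots> \<le> s ^ j * s ^ k * (Fbar y * Fbar y)"
    using \<rho>_power_le[of j k] jk Fbar_nonneg[of y] by (intro mult_right_mono) auto
  finally show ?thesis .
qed

lemma prob_big_claim_overlaps_le:
  assumes y: "y > 0"
  shows "(\<Sum>k<K. \<Sum>j<k. prob (big_claim y j \<inter> big_claim y k)) \<le> Fbar y * Fbar y / ((1 - s) * (1 - s))"
proof -
  have "(\<Sum>k<K. \<Sum>j<k. prob (big_claim y j \<inter> big_claim y k)) \<le> (\<Sum>k<K. \<Sum>j<k. s ^ j * s ^ k * (Fbar y * Fbar y))"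
    using prob_big_claim_pair_le[OF _ y] by (intro sum_mono) auto
  also have "\<dots> = (\<Sum>k<K. s ^ k * (\<Sum>j<k. s ^ j)) * (Fbar y * Fbar y)"
    by (simp add: sum_distrib_left sum_distrib_right mult_ac)
  also have "\<dots> \<le> (\<Sum>k<K. s ^ k * (1 / (1 - s))) * (Fbar y * Fbar y)"
    using s_bounds sum_s_power_le Fbar_nonneg[of y] by (intro mult_right_mono sum_mono mult_left_mono) auto
  also have "\<dots> = (\<Sum>k<K. s ^ k) * (1 / (1 - s)) * (Fbar y * Fbar y)"
    by (simp only: sum_distrib_right)
  also have "\<dots> \<le> (1 / (1 - s)) * (1 / (1 - s)) * (Fbar y * Fbar y)"
    using s_bounds sum_s_power_le[of K] Fbar_nonneg[of y] by (intro mult_right_mono) auto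
  also have "\<dots> = Fbar y * Fbar y / ((1 - s) * (1 - s))" by simp
  finally show ?thesis .
qed

lemma ruin_prob_ge_big_claims:
  assumes x: "0 < x1" "x1 \<le> x2"
  shows "lam * tail_int (x2 + p1) - Fbar (x2 + p1) * Fbar (x2 + p1) / ((1 - s) * (1 - s))
         \<le> prob (ruin_event x1 x2)"
proof -
  define y where "y = x2 + p1"
  have y: "y > 0" unfolding y_def using x p by simp
  have R: "ruin_event x1 x2 \<in> events" using x by (intro ruin_event_sets) auto
  have partial: "(\<Sum>k<K. prob (big_claim y k)) \<le> prob (ruin_event x1 x2) + Fbar y * Fbar y / ((1 - s) * (1 - s))" for K
  proof -
    have "AE \<omega>\<in>(\<Union>k<K. big_claim y k) in M. \<omega> \<in> ruin_event x1 x2"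
      using AE_admissible by eventually_elim (use big_claim_ruin[OF x] y_def in blast)
    then have "prob (\<Union>k<K. big_claim y k) \<le> prob (ruin_event x1 x2)"
      by (intro finite_measure_mono_AE R)
    with prob_Union_ge_bonferroni[of "big_claim y" K] prob_big_claim_overlaps_le[OF y, of K]
    show ?thesis by simp
  qed
  have "(\<lambda>K. \<Sum>k<K. prob (big_claim y k)) \<longlonglongrightarrow> lam * tail_int y"
    using sums_prob_big_claim[OF y] by (simp add: sums_def)
  then have "lam * tail_int y \<le> prob (ruin_event x1 x2) + Fbar y * Fbar y / ((1 - s) * (1 - s))"
    by (rule LIMSEQ_le_const2) (use partial in auto)
  then show ?thesis unfolding y_def by simp
qed

lemma eventually_ruin_prob_lower:
  assumes \<eta>: "0 < \<eta>" "\<eta> \<le> 1"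
  shows "\<forall>\<^sub>F x2 in at_top. \<forall>x1. 0 < x1 \<and> x1 \<le> x2 \<longrightarrow>
           (1 - \<eta>) * (lam * tail_int x2) \<le> prob (ruin_event x1 x2)"
proof -
  have p1: "0 \<le> p1" using p by linarith
  have pos: "0 < (1 - s) * (1 - s)" using s_bounds by simp
  have "\<forall>\<^sub>F y in at_top. (1 - \<eta> / 2) * tail_int y \<le> tail_int (y + p1)"
    by (rule eventually_tail_int_shift_lower) (use \<eta> p1 in auto)
  moreover have "\<forall>\<^sub>F y in at_top. Fbar (1 * y) * Fbar (1 * y) \<le> (\<eta> / 2 * lam * ((1 - s) * (1 - s))) * tail_int y"
    by (rule Fbar_sq_negligible) (use \<eta> lam pos in auto)
  ultimately show ?thesis
  proof eventually_elim
    case (elim x2)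
    have "Fbar (x2 + p1) * Fbar (x2 + p1) \<le> Fbar x2 * Fbar x2"
      using Fbar_antimono[of x2 "x2 + p1"] p1 Fbar_nonneg by (intro mult_mono) auto
    also have "\<dots> \<le> \<eta> / 2 * (lam * tail_int x2) * ((1 - s) * (1 - s))"
      using elim(2) by (simp add: mult_ac)
    finally have sq: "Fbar (x2 + p1) * Fbar (x2 + p1) / ((1 - s) * (1 - s)) \<le> \<eta> / 2 * (lam * tail_int x2)"
      using pos by (simp add: pos_divide_le_eq)
    have "lam * ((1 - \<eta> / 2) * tail_int x2) \<le> lam * tail_int (x2 + p1)"
      using elim(1) lam by (intro mult_left_mono) auto
    moreover have "(1 - \<eta>) * (lam * tail_int x2) = lam * ((1 - \<eta> / 2) * tail_int x2) - \<eta> / 2 * (lam * tail_int x2)"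
      by (simp add: algebra_simps)
    ultimately have "(1 - \<eta>) * (lam * tail_int x2)
        \<le> lam * tail_int (x2 + p1) - Fbar (x2 + p1) * Fbar (x2 + p1) / ((1 - s) * (1 - s))"
      using sq by linarith
    then show ?case using ruin_prob_ge_big_claims by (blast intro: order_trans)
  qed
qed

section \<open>Upper bound\<close>

lemma ruin_cases:
  assumes x: "0 < x1" "x1 \<le> x2" and \<epsilon>: "0 < \<epsilon>" "\<epsilon> < 1" and m: "m \<ge> 1" and \<tau>: "0 < \<tau>" "\<tau> < 1"
    and g: "admissible \<omega>" and R: "\<omega> \<in> ruin_event x1 x2"
  shows "(\<exists>k. \<omega> \<in> big_claim ((1 - \<epsilon>) * x2) k) \<or>
         (\<exists>j<m. \<exists>k<m. j \<noteq> k \<and> \<sigma> j \<omega> > \<epsilon> * x2 / m \<and> \<sigma> k \<omega> > \<epsilon> * x2 / m) \<or>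
         (\<exists>k. \<theta> (max k m) \<omega> \<le> T \<and> \<sigma> k \<omega> > x2 * (1 - \<tau>) * \<tau> ^ k)"
proof -
  obtain t where \<omega>: "\<omega> \<in> space M" and t: "0 \<le> t" "t \<le> T" and Q: "ruined x1 x2 t \<omega>"
    using R unfolding ruin_event_def by auto
  define n where "n = count_proc W t \<omega>"
  have kn: "k < n \<longleftrightarrow> \<theta> k \<omega> \<le> t" for k unfolding n_def by (rule admissible_less_count_proc_iff[OF g])
  define Y where "Y k = exp (- r * \<theta> k \<omega>) * \<sigma> k \<omega>" for k
  have Y\<sigma>: "Y k \<le> \<sigma> k \<omega>" for k unfolding Y_def by (rule discounted_claim_le_claim[OF g \<omega>])
  have "p2 * (1 - exp (- r * t)) \<ge> 0" using t r p by (intro mult_nonneg_nonneg) auto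
  then have sum: "(\<Sum>k<n. Y k) > x2"
    using Q unfolding ruined_def Xproc_def Y_def n_def \<theta>_def by linarith
  consider (single) k where "k < n" "Y k > (1 - \<epsilon>) * x2"
    | (few) "n \<le> m" "\<And>k. k < n \<Longrightarrow> Y k \<le> (1 - \<epsilon>) * x2"
    | (many) "m < n"
    by (meson not_le)
  then show ?thesis
  proof cases
    case single
    then have "\<omega> \<in> big_claim ((1 - \<epsilon>) * x2) k" using kn[of k] t \<omega> unfolding big_claim_def Y_def by auto
    then show ?thesis by blast
  next
    case few
    from sum_gt_two_terms_large[OF sum Y\<sigma> few(2) few(1) m \<epsilon>] x show ?thesis by auto
  next
    case many
    then have "\<theta> m \<omega> \<le> t" using kn[of m] by simp
    obtain k where k: "k < n" "\<sigma> k \<omega> > x2 * (1 - \<tau>) * \<tau> ^ k"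
      using sum_gt_term_exceeds_geometric[OF sum Y\<sigma> \<tau>] x by auto
    have "\<theta> (max k m) \<omega> \<le> T"
      using kn[of k] \<open>\<theta> m \<omega> \<le> t\<close> k t by (cases "k \<le> m") (auto simp: max_def)
    with k show ?thesis by blast
  qed
qed

lemma prob_two_of_first_claims_gt:
  assumes a: "a > 0"
  shows "prob (\<Union>j<m. \<Union>k<m. {\<omega> \<in> space M. j \<noteq> k \<and> \<sigma> j \<omega> > a \<and> \<sigma> k \<omega> > a})
         \<le> real m * real m * (Fbar a * Fbar a)"
proof -
  let ?B = "\<lambda>j k. {\<omega> \<in> space M. j \<noteq> k \<and> \<sigma> j \<omega> > a \<and> \<sigma> k \<omega> > a}"
  have B: "prob (?B j k) \<le> Fbar a * Fbar a" for j k
  proof (cases "j = k")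
    case True then show ?thesis using Fbar_nonneg[of a] by simp
  next
    case False
    then show ?thesis using prob_two_claims_gt[OF False a] by simp
  qed
  have "prob (\<Union>j<m. \<Union>k<m. ?B j k) \<le> (\<Sum>j<m. prob (\<Union>k<m. ?B j k))"
    by (rule finite_measure_subadditive_finite) auto
  also have "\<dots> \<le> (\<Sum>j<m. \<Sum>k<m. prob (?B j k))"
    by (intro sum_mono finite_measure_subadditive_finite) auto
  also have "\<dots> \<le> (\<Sum>j<m. \<Sum>k<m. Fbar a * Fbar a)" using B by (intro sum_mono) auto
  finally show ?thesis by simp
qed

lemma summable_late_claim_bound: "summable (\<lambda>k. \<rho> ^ Suc (max k m) * Fbar (y k))"
proof (rule summable_comparison_test)
  show "summable (\<lambda>k. \<rho> ^ k)" using \<rho>_bounds by (intro summable_geometric) auto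
  have "\<rho> ^ Suc (max k m) * Fbar (y k) \<le> \<rho> ^ k" for k
  proof -
    have "\<rho> ^ Suc (max k m) * Fbar (y k) \<le> \<rho> ^ Suc (max k m) * 1"
      using \<rho>_bounds Fbar_le_1 by (intro mult_left_mono) auto
    also have "\<dots> \<le> \<rho> ^ k" using \<rho>_bounds by (simp only: mult_1_right, intro power_decreasing) auto
    finally show ?thesis .
  qed
  then show "\<exists>N. \<forall>k\<ge>N. norm (\<rho> ^ Suc (max k m) * Fbar (y k)) \<le> \<rho> ^ k"
    using \<rho>_bounds Fbar_nonneg by auto
qed

lemma prob_late_claim_gt:
  assumes y: "\<And>k. y k > 0"
  shows "prob (\<Union>k. {\<omega> \<in> space M. \<theta> (max k m) \<omega> \<le> T \<and> \<sigma> k \<omega> > y k})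
         \<le> (\<Sum>k. \<rho> ^ Suc (max k m) * Fbar (y k))"
proof -
  let ?C = "\<lambda>k. {\<omega> \<in> space M. \<theta> (max k m) \<omega> \<le> T \<and> \<sigma> k \<omega> > y k}"
  have C: "prob (?C k) \<le> \<rho> ^ Suc (max k m) * Fbar (y k)" for k
    unfolding prob_arrival_le_claim_gt[OF y]
    using prob_arrival_le_T Fbar_nonneg by (intro mult_right_mono) auto
  have "summable (\<lambda>k. prob (?C k))"
    by (rule summable_comparison_test[OF _ summable_late_claim_bound[of m y]]) (use C in auto)
  then have "prob (\<Union>k. ?C k) \<le> (\<Sum>k. prob (?C k))"
    by (intro finite_measure_subadditive_countably) auto
  also have "\<dots> \<le> (\<Sum>k. \<rho> ^ Suc (max k m) * Fbar (y k))"
    by (rule suminf_le[OF C \<open>summable _\<close> summable_late_claim_bound[of m y]])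
  finally show ?thesis .
qed

lemma ruin_prob_upper_bound:
  assumes x: "0 < x1" "x1 \<le> x2" and \<epsilon>: "0 < \<epsilon>" "\<epsilon> < 1" and m: "m \<ge> 1" and \<tau>: "0 < \<tau>" "\<tau> < 1"
  shows "prob (ruin_event x1 x2) \<le> lam * tail_int ((1 - \<epsilon>) * x2)
           + real m * real m * (Fbar (\<epsilon> * x2 / m) * Fbar (\<epsilon> * x2 / m))
           + (\<Sum>k. \<rho> ^ Suc (max k m) * Fbar (x2 * (1 - \<tau>) * \<tau> ^ k))"
proof -
  define a where "a = \<epsilon> * x2 / m"
  have a: "a > 0" unfolding a_def using \<epsilon> x m by auto
  define U1 where "U1 = (\<Union>k. big_claim ((1 - \<epsilon>) * x2) k)"
  define U2 where "U2 = (\<Union>j<m. \<Union>k<m. {\<omega> \<in> space M. j \<noteq> k \<and> \<sigma> j \<omega> > a \<and> \<sigma> k \<omega> > a})"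
  define U3 where "U3 = (\<Union>k. {\<omega> \<in> space M. \<theta> (max k m) \<omega> \<le> T \<and> \<sigma> k \<omega> > x2 * (1 - \<tau>) * \<tau> ^ k})"
  have [measurable]: "U1 \<in> events" "U2 \<in> events" "U3 \<in> events" unfolding U1_def U2_def U3_def by measurable
  have "AE \<omega>\<in>ruin_event x1 x2 in M. \<omega> \<in> U1 \<union> U2 \<union> U3"
    using AE_admissible
  proof eventually_elim
    case (elim \<omega>)
    show ?case
    proof
      assume \<omega>R: "\<omega> \<in> ruin_event x1 x2"
      then have "\<omega> \<in> space M" unfolding ruin_event_def by auto
      with ruin_cases[OF x \<epsilon> m \<tau> elim \<omega>R] show "\<omega> \<in> U1 \<union> U2 \<union> U3"
        unfolding U1_def U2_def U3_def a_def by blast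
    qed
  qed
  then have "prob (ruin_event x1 x2) \<le> prob (U1 \<union> U2 \<union> U3)"
    using x by (intro finite_measure_mono_AE ruin_event_sets) auto
  also have "\<dots> \<le> prob U1 + prob U2 + prob U3"
    by (intro order_trans[OF measure_Un_le] add_right_mono measure_Un_le) auto
  also have "prob U1 \<le> lam * tail_int ((1 - \<epsilon>) * x2)"
    unfolding U1_def using \<epsilon> x sums_prob_big_claim[of "(1 - \<epsilon>) * x2"]
    by (intro finite_measure_subadditive_countably[THEN order_trans]) (auto simp: sums_iff)
  also have "prob U2 \<le> real m * real m * (Fbar a * Fbar a)"
    unfolding U2_def by (rule prob_two_of_first_claims_gt[OF a])
  also have "prob U3 \<le> (\<Sum>k. \<rho> ^ Suc (max k m) * Fbar (x2 * (1 - \<tau>) * \<tau> ^ k))"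
    unfolding U3_def using x \<tau> by (intro prob_late_claim_gt) auto
  finally show ?thesis unfolding a_def by simp
qed

lemma late_claim_term_le:
  assumes C: "C > 0" and potter: "\<And>u. u \<ge> 1 \<Longrightarrow> Fbar (x / u) \<le> C * u powr (\<alpha> + 1) * Fbar x"
    and \<tau>: "0 < \<tau>" "\<tau> < 1" "\<tau> powr (\<alpha> + 1) = sqrt s"
  shows "\<rho> ^ Suc (max k m) * Fbar (x * (1 - \<tau>) * \<tau> ^ k)
         \<le> s ^ m * (C * (1 / (1 - \<tau>)) powr (\<alpha> + 1) * Fbar x) * sqrt s ^ k"
proof -
  have ss: "0 < sqrt s" using s_bounds by auto
  define u where "u = 1 / ((1 - \<tau>) * \<tau> ^ k)"
  have den: "0 < (1 - \<tau>) * \<tau> ^ k" "(1 - \<tau>) * \<tau> ^ k \<le> 1"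
    using \<tau> by (auto intro!: mult_le_one power_le_one)
  have u: "u \<ge> 1" unfolding u_def using den by simp
  have "u powr (\<alpha> + 1) = (1 / (1 - \<tau>)) powr (\<alpha> + 1) / (\<tau> ^ k) powr (\<alpha> + 1)"
    unfolding u_def using \<tau> by (simp add: powr_divide[symmetric])
  also have "(\<tau> ^ k) powr (\<alpha> + 1) = sqrt s ^ k"
    using \<tau> by (simp add: powr_realpow[symmetric] powr_powr mult.commute \<tau>(3)[symmetric])
  finally have F: "Fbar (x * (1 - \<tau>) * \<tau> ^ k) \<le> C * ((1 / (1 - \<tau>)) powr (\<alpha> + 1) / sqrt s ^ k) * Fbar x"
    using potter[OF u] unfolding u_def by (simp add: mult.assoc)
  have "\<rho> ^ Suc (max k m) \<le> s ^ k * s ^ m"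
    using \<rho>_power_le[of k m] \<rho>_power_le[of m k] by (cases "k \<le> m") (simp_all add: max_def mult.commute)
  then have "\<rho> ^ Suc (max k m) * Fbar (x * (1 - \<tau>) * \<tau> ^ k)
      \<le> (s ^ k * s ^ m) * (C * ((1 / (1 - \<tau>)) powr (\<alpha> + 1) / sqrt s ^ k) * Fbar x)"
    using F Fbar_nonneg \<rho>_bounds s_bounds by (intro mult_mono) auto
  also have "s ^ k = sqrt s ^ k * sqrt s ^ k" using s_bounds by (simp add: power_mult_distrib[symmetric])
  also have "(sqrt s ^ k * sqrt s ^ k * s ^ m) * (C * ((1 / (1 - \<tau>)) powr (\<alpha> + 1) / sqrt s ^ k) * Fbar x)
     = s ^ m * (C * (1 / (1 - \<tau>)) powr (\<alpha> + 1) * Fbar x) * sqrt s ^ k"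
    using ss by (simp add: field_simps)
  finally show ?thesis .
qed

text \<open>With \<open>\<tau>\<^bsup>\<alpha>+1\<^esup> = \<surd>s\<close>, Potter's bound turns the thresholds \<open>x (1 - \<tau>) \<tau>\<^sup>k\<close> into a geometric
  series in \<open>\<surd>s\<close>, and the factor \<open>s\<^sup>m\<close> makes it small.\<close>
lemma late_claims_negligible:
  assumes \<eta>: "\<eta> > 0"
  obtains \<tau> m where "0 < \<tau>" "\<tau> < 1" "m \<ge> 1"
    "\<forall>\<^sub>F x in at_top. (\<Sum>k. \<rho> ^ Suc (max k m) * Fbar (x * (1 - \<tau>) * \<tau> ^ k)) \<le> \<eta> * tail_int x"
proof -
  obtain C where C: "C > 0" and potter: "\<forall>\<^sub>F x in at_top. \<forall>u\<ge>1. Fbar (x / u) \<le> C * u powr (\<alpha> + 1) * Fbar x"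
    using potter_bound by blast
  obtain G where G: "G > 0" "\<forall>\<^sub>F x in at_top. Fbar (1 * x) \<le> G * tail_int x"
    using Fbar_le_tail_int[of 1] by auto
  have ss: "0 < sqrt s" "sqrt s < 1" using s_bounds by auto
  define \<tau> where "\<tau> = sqrt s powr (1 / (\<alpha> + 1))"
  have \<tau>: "0 < \<tau>" "\<tau> < 1" "\<tau> powr (\<alpha> + 1) = sqrt s"
    unfolding \<tau>_def using ss \<alpha> by (auto simp: powr01_less_one powr_powr)
  define X where "X = C * (1 / (1 - \<tau>)) powr (\<alpha> + 1)"
  define K where "K = X * G / (1 - sqrt s)"
  have K: "K > 0" unfolding K_def X_def using C G ss \<tau> by simp
  obtain n where n: "s ^ n < \<eta> / K" using real_arch_pow_inv[of "\<eta> / K" s] \<eta> K s_bounds by auto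
  define m where "m = max n 1"
  have m: "m \<ge> 1" unfolding m_def by simp
  have "s ^ m * K \<le> s ^ n * K"
    unfolding m_def using s_bounds K by (intro mult_right_mono power_decreasing) auto
  also have "\<dots> < \<eta>" using n K by (simp add: field_simps)
  finally have smK: "s ^ m * K \<le> \<eta>" by simp
  have "\<forall>\<^sub>F x in at_top. (\<Sum>k. \<rho> ^ Suc (max k m) * Fbar (x * (1 - \<tau>) * \<tau> ^ k)) \<le> \<eta> * tail_int x"
    using potter G(2)
  proof eventually_elim
    case (elim x)
    have geo: "(\<lambda>k. s ^ m * (X * Fbar x) * sqrt s ^ k) sums (s ^ m * (X * Fbar x) * (1 / (1 - sqrt s)))"
      using ss by (intro sums_mult geometric_sums) auto
    have "(\<Sum>k. \<rho> ^ Suc (max k m) * Fbar (x * (1 - \<tau>) * \<tau> ^ k)) \<le> (\<Sum>k. s ^ m * (X * Fbar x) * sqrt s ^ k)"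
      using late_claim_term_le[OF C _ \<tau>] elim(1) summable_late_claim_bound sums_summable[OF geo]
      unfolding X_def by (intro suminf_le) (auto simp: mult.assoc)
    also have "\<dots> = s ^ m * (X * Fbar x) / (1 - sqrt s)" using geo by (simp add: sums_iff)
    also have "\<dots> \<le> s ^ m * (X * (G * tail_int x)) / (1 - sqrt s)"
      using elim(2) ss s_bounds C \<tau> unfolding X_def by (intro divide_right_mono mult_left_mono) auto
    also have "\<dots> = (s ^ m * K) * tail_int x" unfolding K_def by (simp add: field_simps)
    also have "\<dots> \<le> \<eta> * tail_int x" using smK tail_int_nonneg by (intro mult_right_mono) auto
    finally show ?case .
  qed
  with \<tau> m that show ?thesis by blast
qed

lemma eventually_ruin_prob_upper:
  assumes \<eta>: "0 < \<eta>" "\<eta> \<le> 1"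
  shows "\<forall>\<^sub>F x2 in at_top. \<forall>x1. 0 < x1 \<and> x1 \<le> x2 \<longrightarrow>
           prob (ruin_event x1 x2) \<le> (1 + \<eta>) * (lam * tail_int x2)"
proof -
  obtain \<epsilon> where \<epsilon>: "0 < \<epsilon>" "\<epsilon> < 1"
    and shrink: "\<forall>\<^sub>F y in at_top. tail_int ((1 - \<epsilon>) * y) \<le> (1 + \<eta> / 3) * tail_int y"
    using tail_int_shrink_upper[of "\<eta> / 3"] \<eta> by auto
  obtain \<tau> m where \<tau>: "0 < \<tau>" "\<tau> < 1" and m: "m \<ge> 1"
    and late: "\<forall>\<^sub>F x in at_top. (\<Sum>k. \<rho> ^ Suc (max k m) * Fbar (x * (1 - \<tau>) * \<tau> ^ k)) \<le> \<eta> / 3 * lam * tail_int x"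
    using late_claims_negligible[of "\<eta> / 3 * lam"] \<eta> lam by auto
  have pairs: "\<forall>\<^sub>F x in at_top. Fbar (\<epsilon> / m * x) * Fbar (\<epsilon> / m * x) \<le> \<eta> / 3 * lam / (m * m) * tail_int x"
    by (rule Fbar_sq_negligible) (use \<epsilon> m \<eta> lam in auto)
  from shrink late pairs show ?thesis
  proof eventually_elim
    case (elim x2)
    show ?case
    proof (intro allI impI, elim conjE)
      fix x1 assume x: "0 < x1" "x1 \<le> x2"
      have "lam * tail_int ((1 - \<epsilon>) * x2) \<le> lam * ((1 + \<eta> / 3) * tail_int x2)"
        using elim(1) lam by (intro mult_left_mono) auto
      moreover have "real m * real m * (Fbar (\<epsilon> * x2 / m) * Fbar (\<epsilon> * x2 / m)) \<le> \<eta> / 3 * lam * tail_int x2"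
        using mult_left_mono[OF elim(3), of "real m * real m"] m by simp
      ultimately show "prob (ruin_event x1 x2) \<le> (1 + \<eta>) * (lam * tail_int x2)"
        using ruin_prob_upper_bound[OF x \<epsilon> m \<tau>] elim(2) by (simp add: algebra_simps)
    qed
  qed
qed

lemma ruin_prob_asymptotic:
  assumes \<epsilon>: "\<epsilon> > 0"
  shows "\<exists>x0>0. \<forall>x1 x2. x0 \<le> x1 \<and> x1 \<le> x2 \<longrightarrow>
           \<bar>prob (ruin_event x1 x2) / (lam * tail_int x2) - 1\<bar> < \<epsilon>"
proof -
  define \<eta> where "\<eta> = min \<epsilon> 1 / 2"
  have \<eta>: "0 < \<eta>" "\<eta> \<le> 1" "\<eta> < \<epsilon>" unfolding \<eta>_def using \<epsilon> by auto
  have "\<forall>\<^sub>F x2 in at_top. 0 < tail_int x2 \<and> (\<forall>x1. 0 < x1 \<and> x1 \<le> x2 \<longrightarrow>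
          (1 - \<eta>) * (lam * tail_int x2) \<le> prob (ruin_event x1 x2)
          \<and> prob (ruin_event x1 x2) \<le> (1 + \<eta>) * (lam * tail_int x2))"
    using eventually_tail_int_pos eventually_ruin_prob_lower[OF \<eta>(1,2)] eventually_ruin_prob_upper[OF \<eta>(1,2)]
    by eventually_elim blast
  then obtain N where N: "\<And>x2. x2 \<ge> N \<Longrightarrow> 0 < tail_int x2 \<and> (\<forall>x1. 0 < x1 \<and> x1 \<le> x2 \<longrightarrow>
          (1 - \<eta>) * (lam * tail_int x2) \<le> prob (ruin_event x1 x2)
          \<and> prob (ruin_event x1 x2) \<le> (1 + \<eta>) * (lam * tail_int x2))"
    unfolding eventually_at_top_linorder by blast
  have "\<bar>prob (ruin_event x1 x2) / (lam * tail_int x2) - 1\<bar> < \<epsilon>" if x: "max N 1 \<le> x1" "x1 \<le> x2" for x1 x2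
  proof -
    have D: "0 < lam * tail_int x2" using N[of x2] x lam by simp
    have "\<bar>prob (ruin_event x1 x2) - lam * tail_int x2\<bar> \<le> \<eta> * (lam * tail_int x2)"
      using N[of x2] x by (auto simp: abs_le_iff algebra_simps)
    also have "\<dots> < \<epsilon> * (lam * tail_int x2)" using \<eta> D by (intro mult_strict_right_mono) auto
    finally have "\<bar>prob (ruin_event x1 x2) - lam * tail_int x2\<bar> / (lam * tail_int x2) < \<epsilon>"
      using D by (simp add: pos_divide_less_eq)
    moreover have "prob (ruin_event x1 x2) / (lam * tail_int x2) - 1
        = (prob (ruin_event x1 x2) - lam * tail_int x2) / (lam * tail_int x2)"
      using lam N[of x2] x by (simp add: diff_divide_distrib)
    ultimately show ?thesis using D by (simp add: abs_divide)
  qed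
  then show ?thesis by (intro exI[of _ "max N 1"]) auto
qed

lemma Psi_max_asymptotic:
  assumes "\<epsilon> > 0"
  shows "\<exists>x0. \<forall>x1 x2. x0 \<le> x1 \<and> x1 \<le> x2 \<longrightarrow>
           \<bar>Psi_max M r p1 p2 W \<sigma> x1 x2 T
             / (lam * T * prob {\<omega> \<in> space M. exp (- r * V \<omega>) * \<sigma> 0 \<omega> > x2}) - 1\<bar> < \<epsilon>"
proof -
  obtain x0 where x0: "x0 > 0" and bound: "\<And>x1 x2. x0 \<le> x1 \<Longrightarrow> x1 \<le> x2 \<Longrightarrow>
      \<bar>prob (ruin_event x1 x2) / (lam * tail_int x2) - 1\<bar> < \<epsilon>"
    using ruin_prob_asymptotic[OF assms] by blast
  have "\<bar>Psi_max M r p1 p2 W \<sigma> x1 x2 T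
          / (lam * T * prob {\<omega> \<in> space M. exp (- r * V \<omega>) * \<sigma> 0 \<omega> > x2}) - 1\<bar> < \<epsilon>"
    if x: "x0 \<le> x1" "x1 \<le> x2" for x1 x2
  proof -
    have "x2 > 0" using x x0 by linarith
    then have den: "lam * T * prob {\<omega> \<in> space M. exp (- r * V \<omega>) * \<sigma> 0 \<omega> > x2} = lam * tail_int x2"
      using prob_discounted_claim_gt T by simp
    show ?thesis unfolding Psi_max_eq_prob_ruin_event den using bound[OF x] .
  qed
  then show ?thesis by blast
qed

end

theorem theorem3p1:
  fixes M :: "'a measure"
    and W \<sigma> :: "nat \<Rightarrow> 'a \<Rightarrow> real"
    and V :: "'a \<Rightarrow> real"
    and r c1 c2 \<delta>1 \<delta>2 lam T \<alpha> :: real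
    and L :: "real \<Rightarrow> real"
  assumes M: "prob_space M"
    and r: "r > 0" and c: "c1 > 0" "c2 > 0"
    and \<delta>: "0 < \<delta>1" "\<delta>1 < 1" "0 < \<delta>2" "\<delta>2 < 1" "\<delta>1 + \<delta>2 = 1"
    and p_order: "c1 / \<delta>1 > c2 / \<delta>2"
    and lam: "lam > 0"
    and T: "T > 0"
    and indep: "prob_space.indep_vars M (\<lambda>_. borel)
                  (\<lambda>j. case j of Inl k \<Rightarrow> W k | Inr k \<Rightarrow> \<sigma> k) UNIV"
    and W_exp: "\<And>k. distributed M lborel (W k) (exponential_density lam)"
    and \<sigma>_meas: "\<And>k. \<sigma> k \<in> borel_measurable M"
    and \<sigma>_ident: "\<And>k. distr M borel (\<sigma> k) = distr M borel (\<sigma> 0)"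
    and \<sigma>_nonneg: "\<And>k \<omega>. \<omega> \<in> space M \<Longrightarrow> \<sigma> k \<omega> \<ge> 0"
    and alpha: "\<alpha> > 0"
    and L_cont: "continuous_on {0<..} L"
    and L_sv: "slowly_varying L"
    and L_inf: "filterlim L at_top at_top"
    and tail: "\<And>k x. x > 0 \<Longrightarrow>
                 measure M {\<omega> \<in> space M. \<sigma> k \<omega> > x} = L x / x powr \<alpha>"
    and V_unif: "distr M borel V = uniform_measure lborel {0<..T}"
    and V_meas: "V \<in> borel_measurable M"
    and V_indep: "prob_space.indep_var M borel V borel (\<sigma> 0)"
  shows "\<forall>\<epsilon>>0. \<exists>x0. \<forall>x1 x2. x0 \<le> x1 \<and> x1 \<le> x2 \<longrightarrow>
           \<bar>Psi_max M r (c1 / (r * \<delta>1)) (c2 / (r * \<delta>2)) W \<sigma> x1 x2 T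
             / (lam * T * measure M {\<omega> \<in> space M. exp (- r * V \<omega>) * \<sigma> 0 \<omega> > x2}) - 1\<bar> < \<epsilon>"
proof -
  have "c2 / (r * \<delta>2) \<le> c1 / (r * \<delta>1)"
    using divide_right_mono[OF less_imp_le[OF p_order], of r] r by (simp add: field_simps)
  moreover have "0 \<le> c2 / (r * \<delta>2)" using c r \<delta> by simp
  ultimately interpret risk_model M W \<sigma> V r lam T \<alpha> "c1 / (r * \<delta>1)" "c2 / (r * \<delta>2)" L
    using M r lam T indep W_exp \<sigma>_meas \<sigma>_nonneg alpha L_sv L_inf tail V_unif V_meas V_indep
    by (intro risk_model.intro risk_model_axioms.intro) auto
  show ?thesis using Psi_max_asymptotic by blast
qed

end
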